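(* Let $n\ge1$ and $\mathbf{P}_A,\mathbf{P}_B,\mathbf{Q}_A,\mathbf{Q}_B\in\mathbb{R}^{n\times n}$ be symmetric positive definite. Let $\omega_1\in[0,1]$. Then $\mathcal{E}(\mathbf{B}_{\mathrm{SCI}}(\omega_1))$ tightly circumscribes $\mathcal{V}^*$ if and only if there exists $\mathbf{x}\neq\mathbf{0}$ such that $g(\mathbf{x})=\mathbf{x}^\intercal\mathbf{H}_{\mathrm{SCI}}(\omega_1)\mathbf{x}$.
   Context: $\mathbf{C}_A=\mathbf{P}_A+\mathbf{Q}_A$, $\mathbf{C}_B=\mathbf{P}_B+\mathbf{Q}_B$. For $\omega\in[0,1]$, $\bar\omega=1-\omega$: $\mathbf{H}_{\mathrm{SCI}}(\omega)=\omega(\mathbf{P}_A+\omega\mathbf{Q}_A)^{-1}+\bar\omega(\mathbf{P}_B+\bar\omega\mathbf{Q}_B)^{-1}$ and $\mathbf{B}_{\mathrm{SCI}}(\omega)=\mathbf{H}_{\mathrm{SCI}}(\omega)^{-1}$. $\mathcal{A}_{\mathrm{Split}}=\{\mathbf{M} : \begin{bmatrix}\mathbf{P}_A & \mathbf{M}\\ \mathbf{M}^\intercal & \mathbf{P}_B\end{bmatrix}\succeq 0\}$. $\mathbf{C}_F(\mathbf{K},\mathbf{P}_{AB})=\mathbf{K}_A\mathbf{C}_A\mathbf{K}_A^\intercal+\mathbf{K}_A\mathbf{P}_{AB}\mathbf{K}_B^\intercal+\mathbf{K}_B\mathbf{P}_{AB}^\intercal\mathbf{K}_A^\intercal+\mathbf{K}_B\mathbf{C}_B\mathbf{K}_B^\intercal$.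 For $\mathbf{P}_{AB}\in\mathcal{A}_{\mathrm{Split}}$: $\mathbf{R}=\mathbf{C}_A+\mathbf{C}_B-\mathbf{P}_{AB}-\mathbf{P}_{AB}^\intercal$, $\mathbf{K}_A^*=(\mathbf{C}_B-\mathbf{P}_{AB}^\intercal)\mathbf{R}^{-1}$, $\mathbf{C}_F^*(\mathbf{P}_{AB})=\mathbf{C}_F((\mathbf{K}_A^*,\mathbf{I}-\mathbf{K}_A^* ),\mathbf{P}_{AB})$, $\mathbf{M}_F^*(\mathbf{P}_{AB})=\mathbf{C}_F^*(\mathbf{P}_{AB})^{-1}$. $g(\mathbf{x})=\min_{\mathbf{P}_{AB}\in\mathcal{A}_{\mathrm{Split}}}\mathbf{x}^\intercal\mathbf{M}_F^*(\mathbf{P}_{AB})\mathbf{x}$. For symmetric positive definite $\mathbf{P}$, $\mathcal{E}(\mathbf{P})=\{\mathbf{x}:\mathbf{x}^\intercal\mathbf{P}^{-1}\mathbf{x}\le1\}$; $\mathcal{V}^*=\bigcup_{\mathbf{P}_{AB}\in\mathcal{A}_{\mathrm{Split}}}\mathcal{E}(\mathbf{C}_F^*(\mathbf{P}_{AB}))$. $\mathcal{E}(\mathbf{P})$ tightly circumscribes $\mathcal{V}^*$ if $\mathcal{V}^*\subseteq\mathcal{E}(\mathbf{P})$ and for every symmetric positive definite $\mathbf{Q}$, $\mathcal{V}^*\subseteq\mathcal{E}(\mathbf{Q})\subseteq\mathcal{E}(\mathbf{P})$ implies $\mathbf{Q}=\mathbf{P}$. *)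

theory Defs
  imports "HOL-Analysis.Analysis"
begin

definition sym_mat :: "real^'n^'n \<Rightarrow> bool" where
  "sym_mat A \<longleftrightarrow> transpose A = A"

definition spd :: "real^'n^'n \<Rightarrow> bool" where
  "spd A \<longleftrightarrow> sym_mat A \<and> (\<forall>x. x \<noteq> 0 \<longrightarrow> x \<bullet> (A *v x) > 0)"

definition psd :: "real^'n^'n \<Rightarrow> bool" where
  "psd A \<longleftrightarrow> sym_mat A \<and> (\<forall>x. x \<bullet> (A *v x) \<ge> 0)"

definition block2 :: "real^'n^'n \<Rightarrow> real^'n^'n \<Rightarrow> real^'n^'n \<Rightarrow> real^('n+'n)^('n+'n)" where
  "block2 A M B = (\<chi> i j. case i of
       Inl a \<Rightarrow> (case j of Inl b \<Rightarrow> A $ a $ b | Inr b \<Rightarrow> M $ a $ b)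
     | Inr a \<Rightarrow> (case j of Inl b \<Rightarrow> transpose M $ a $ b | Inr b \<Rightarrow> B $ a $ b))"

definition H_SCI :: "real^'n^'n \<Rightarrow> real^'n^'n \<Rightarrow> real^'n^'n \<Rightarrow> real^'n^'n \<Rightarrow> real \<Rightarrow> real^'n^'n" where
  "H_SCI PA PB QA QB w =
     w *\<^sub>R matrix_inv (PA + w *\<^sub>R QA) + (1 - w) *\<^sub>R matrix_inv (PB + (1 - w) *\<^sub>R QB)"

definition B_SCI :: "real^'n^'n \<Rightarrow> real^'n^'n \<Rightarrow> real^'n^'n \<Rightarrow> real^'n^'n \<Rightarrow> real \<Rightarrow> real^'n^'n" where
  "B_SCI PA PB QA QB w = matrix_inv (H_SCI PA PB QA QB w)"

definition A_Split :: "real^'n^'n \<Rightarrow> real^'n^'n \<Rightarrow> (real^'n^'n) set" where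
  "A_Split PA PB = {M. psd (block2 PA M PB)}"

definition C_F :: "real^'n^'n \<Rightarrow> real^'n^'n \<Rightarrow> real^'n^'n \<Rightarrow> real^'n^'n \<Rightarrow> real^'n^'n \<Rightarrow> real^'n^'n" where
  "C_F CA CB KA KB PAB =
     KA ** CA ** transpose KA + KA ** PAB ** transpose KB
   + KB ** transpose PAB ** transpose KA + KB ** CB ** transpose KB"

definition C_F_opt :: "real^'n^'n \<Rightarrow> real^'n^'n \<Rightarrow> real^'n^'n \<Rightarrow> real^'n^'n \<Rightarrow> real^'n^'n \<Rightarrow> real^'n^'n" where
  "C_F_opt PA PB QA QB PAB =
     (let CA = PA + QA; CB = PB + QB;
          R = CA + CB - PAB - transpose PAB;
          KA = (CB - transpose PAB) ** matrix_inv R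
      in C_F CA CB KA (mat 1 - KA) PAB)"

definition M_F_opt :: "real^'n^'n \<Rightarrow> real^'n^'n \<Rightarrow> real^'n^'n \<Rightarrow> real^'n^'n \<Rightarrow> real^'n^'n \<Rightarrow> real^'n^'n" where
  "M_F_opt PA PB QA QB PAB = matrix_inv (C_F_opt PA PB QA QB PAB)"

text \<open>g(x) = min over A_Split; written as an infimum (the minimum is attained).\<close>
definition g_fun :: "real^'n^'n \<Rightarrow> real^'n^'n \<Rightarrow> real^'n^'n \<Rightarrow> real^'n^'n \<Rightarrow> real^'n \<Rightarrow> real" where
  "g_fun PA PB QA QB x = (INF PAB \<in> A_Split PA PB. x \<bullet> (M_F_opt PA PB QA QB PAB *v x))"

definition ellipsoid :: "real^'n^'n \<Rightarrow> (real^'n) set" where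
  "ellipsoid P = {x. x \<bullet> (matrix_inv P *v x) \<le> 1}"

definition V_star :: "real^'n^'n \<Rightarrow> real^'n^'n \<Rightarrow> real^'n^'n \<Rightarrow> real^'n^'n \<Rightarrow> (real^'n) set" where
  "V_star PA PB QA QB = (\<Union>PAB \<in> A_Split PA PB. ellipsoid (C_F_opt PA PB QA QB PAB))"

definition tightly_circumscribes :: "real^'n^'n \<Rightarrow> (real^'n) set \<Rightarrow> bool" where
  "tightly_circumscribes P V \<longleftrightarrow> V \<subseteq> ellipsoid P \<and>
     (\<forall>Q. spd Q \<longrightarrow> V \<subseteq> ellipsoid Q \<longrightarrow> ellipsoid Q \<subseteq> ellipsoid P \<longrightarrow> Q = P)"

end

theory Submission
  imports Defs
begin

text \<open>
  Write \<open>h(w, x) = x\<^sup>T H\<^sub>S\<^sub>C\<^sub>I(w) x\<close>. Its derivative in \<open>w\<close> is the quadratic form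
  \<open>q(w, x) = |(P\<^sub>A + w Q\<^sub>A)\<inverse> x|\<^sup>2\<^sub>P\<^sub>A - |(P\<^sub>B + (1 - w) Q\<^sub>B)\<inverse> x|\<^sup>2\<^sub>P\<^sub>B\<close>, which is strictly
  decreasing in \<open>w\<close>, and \<open>h\<close> is concave in \<open>w\<close>. For every admissible cross-covariance the fused
  information form dominates every \<open>h(w, \<cdot>)\<close>, so \<open>g \<ge> h(w, \<cdot>)\<close> and \<open>\<V>\<^sup>* \<subseteq> \<E>(B\<^sub>S\<^sub>C\<^sub>I(w))\<close>;
  conversely a rank-one cross-covariance gives \<open>g(x) = h(w, x)\<close> whenever \<open>q(w, x) = 0\<close>, or
  \<open>w\<close> is an endpoint and \<open>q(w, x)\<close> has the sign pointing out of \<open>[0, 1]\<close>.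

  Both sides of the equivalence then say that \<open>h(w, \<cdot>)\<close> is not strictly dominated by another
  \<open>h(w', \<cdot>)\<close>. Without touching points \<open>q(w, \<cdot>)\<close> has no isotropic vectors, hence is definite and
  pushes \<open>w\<close> into the interior, where the concavity of \<open>h\<close> yields a dominating weight. For
  tightness, a smaller circumscribing ellipsoid yields a semidefinite excess \<open>D = Q\<inverse> - H\<^sub>S\<^sub>C\<^sub>I(w)\<close>
  bounded by increments of \<open>h\<close> at touching points; it vanishes on the isotropic cone of an
  indefinite \<open>q(w, \<cdot>)\<close>, which spans the space, and in the semidefinite case a small change of the
  weight produces enough isotropic vectors.
\<close>

section \<open>Inverses and positive definite matrices\<close>

lemma matrix_inv_mult:
  fixes A :: "real^'n^'n"
  assumes "invertible A"
  shows matrix_inv_right: "A ** matrix_inv A = mat 1"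
    and matrix_inv_left: "matrix_inv A ** A = mat 1"
proof -
  have "\<exists>A'. A ** A' = mat 1 \<and> A' ** A = mat 1"
    using assms unfolding invertible_def by blast
  from someI_ex[OF this] show "A ** matrix_inv A = mat 1" "matrix_inv A ** A = mat 1"
    unfolding matrix_inv_def by auto
qed

lemma matrix_inv_mult_vector:
  fixes A :: "real^'n^'n"
  assumes "invertible A"
  shows "A *v (matrix_inv A *v x) = x" and "matrix_inv A *v (A *v x) = x"
  using matrix_inv_mult[OF assms] by (simp_all add: matrix_vector_mul_assoc)

lemma matrix_inv_unique:
  fixes A B :: "real^'n^'n"
  assumes "invertible A" and "B ** A = mat 1"
  shows "matrix_inv A = B"
proof -
  have "B = B ** (A ** matrix_inv A)" using matrix_inv_right[OF assms(1)] by simp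
  also have "\<dots> = matrix_inv A" by (simp add: matrix_mul_assoc assms(2))
  finally show ?thesis by simp
qed

lemma invertible_matrix_inv:
  fixes A :: "real^'n^'n"
  assumes "invertible A"
  shows "invertible (matrix_inv A)"
  using matrix_inv_mult[OF assms] unfolding invertible_def by blast

lemma matrix_inv_matrix_inv:
  fixes A :: "real^'n^'n"
  assumes "invertible A"
  shows "matrix_inv (matrix_inv A) = A"
  by (rule matrix_inv_unique[OF invertible_matrix_inv[OF assms] matrix_inv_right[OF assms]])

lemma inner_transpose_commute:
  fixes A :: "real^'n^'n"
  shows "y \<bullet> (transpose A *v x) = x \<bullet> (A *v y)"
  by (simp add: dot_lmul_matrix[symmetric] inner_commute)

lemma sym_mat_inner_commute:
  fixes A :: "real^'n^'n"
  assumes "sym_mat A"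
  shows "x \<bullet> (A *v y) = y \<bullet> (A *v x)"
  using inner_transpose_commute[of x A y] assms unfolding sym_mat_def by simp

lemma matrix_vector_mult_uminus_right: "(A::real^'n^'m) *v (- y) = - (A *v y)"
  by (simp add: matrix_vector_mult_def vec_eq_iff sum_negf)

lemma transpose_add: "transpose (A + B) = transpose A + transpose (B :: real^'n^'m)"
  by (simp add: transpose_def vec_eq_iff)

lemma transpose_diff: "transpose (A - B) = transpose A - transpose (B :: real^'n^'m)"
  by (simp add: transpose_def vec_eq_iff)

lemma sym_mat_add: "sym_mat A \<Longrightarrow> sym_mat B \<Longrightarrow> sym_mat (A + B)"
  unfolding sym_mat_def by (simp add: transpose_add)

lemma sym_mat_diff: "sym_mat A \<Longrightarrow> sym_mat B \<Longrightarrow> sym_mat (A - B)"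
  unfolding sym_mat_def by (simp add: transpose_diff)

lemma sym_mat_scaleR: "sym_mat A \<Longrightarrow> sym_mat (c *\<^sub>R A)"
  unfolding sym_mat_def by (simp add: transpose_scalar)

lemma spd_sym: "spd A \<Longrightarrow> sym_mat A"
  unfolding spd_def by simp

lemma spd_pos: "spd A \<Longrightarrow> x \<noteq> 0 \<Longrightarrow> 0 < x \<bullet> (A *v x)"
  unfolding spd_def by simp

lemma spd_nonneg: "spd A \<Longrightarrow> 0 \<le> x \<bullet> (A *v x)"
  unfolding spd_def by (cases "x = 0") (auto intro: less_imp_le)

lemma spd_imp_psd: "spd A \<Longrightarrow> psd A"
  unfolding psd_def by (simp add: spd_sym spd_nonneg)

lemma spd_invertible:
  fixes A :: "real^'n^'n"
  assumes "spd A"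
  shows "invertible A"
proof -
  have "A *v x = 0 \<longrightarrow> x = 0" for x
    using spd_pos[OF assms, of x] by force
  then show ?thesis using matrix_left_invertible_ker invertible_left_inverse by blast
qed

lemma sym_mat_matrix_inv:
  fixes A :: "real^'n^'n"
  assumes "sym_mat A" and "invertible A"
  shows "sym_mat (matrix_inv A)"
proof -
  have "transpose (matrix_inv A) ** A = mat 1"
    using arg_cong[OF matrix_inv_right[OF assms(2)], of transpose] assms(1)
    unfolding sym_mat_def by (simp add: matrix_transpose_mul)
  then have "matrix_inv A = transpose (matrix_inv A)" by (rule matrix_inv_unique[OF assms(2)])
  then show ?thesis unfolding sym_mat_def by simp
qed

lemma spd_matrix_inv:
  fixes A :: "real^'n^'n"
  assumes "spd A"
  shows "spd (matrix_inv A)"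
  unfolding spd_def
proof (intro conjI allI impI)
  have inv: "invertible A" by (rule spd_invertible[OF assms])
  show "sym_mat (matrix_inv A)" by (rule sym_mat_matrix_inv[OF spd_sym[OF assms] inv])
  fix x :: "real^'n"
  assume "x \<noteq> 0"
  define y where "y = matrix_inv A *v x"
  have x: "x = A *v y" unfolding y_def by (simp add: matrix_inv_mult_vector[OF inv])
  with \<open>x \<noteq> 0\<close> have "0 < y \<bullet> (A *v y)" by (intro spd_pos[OF assms]) auto
  then show "0 < x \<bullet> (matrix_inv A *v x)"
    unfolding x by (simp add: matrix_inv_mult_vector(2)[OF inv] inner_commute)
qed

lemma spd_add_scaleR:
  fixes P Q :: "real^'n^'n"
  assumes "spd P" and "spd Q" and "0 \<le> s"
  shows "spd (P + s *\<^sub>R Q)"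
  unfolding spd_def
proof (intro conjI allI impI)
  show "sym_mat (P + s *\<^sub>R Q)" using assms by (simp add: sym_mat_add sym_mat_scaleR spd_sym)
  fix x :: "real^'n"
  assume "x \<noteq> 0"
  have "0 < x \<bullet> (P *v x)" using assms(1) \<open>x \<noteq> 0\<close> by (rule spd_pos)
  moreover have "0 \<le> s * (x \<bullet> (Q *v x))" using assms(3) spd_nonneg[OF assms(2)] by simp
  ultimately show "0 < x \<bullet> ((P + s *\<^sub>R Q) *v x)"
    by (simp add: matrix_vector_mult_add_rdistrib scaleR_matrix_vector_assoc[symmetric] inner_add_right)
qed

section \<open>Quadratic forms\<close>

lemma sym_form_expand:
  fixes N :: "real^'n^'n"
  assumes "sym_mat N"
  shows "(r *\<^sub>R x + v) \<bullet> (N *v (r *\<^sub>R x + v))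
           = r\<^sup>2 * (x \<bullet> (N *v x)) + 2 * r * (x \<bullet> (N *v v)) + v \<bullet> (N *v v)"
  using sym_mat_inner_commute[OF assms, of v x]
  by (simp add: matrix_vector_right_distrib matrix_vector_mult_scaleR inner_add_left
      inner_add_right power2_eq_square algebra_simps)

lemma psd_form_eq_0_imp_kernel:
  fixes D :: "real^'n^'n"
  assumes "psd D" and "x \<bullet> (D *v x) = 0"
  shows "D *v x = 0"
proof (rule ccontr)
  assume "D *v x \<noteq> 0"
  define y where "y = D *v x"
  define c where "c = \<bar>y \<bullet> (D *v y)\<bar> + 1"
  define t where "t = - (y \<bullet> y) / c"
  have sym: "sym_mat D" using assms(1) unfolding psd_def by simp
  have yy: "0 < y \<bullet> y" using \<open>D *v x \<noteq> 0\<close> unfolding y_def by simp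
  have c: "0 < c" "y \<bullet> (D *v y) \<le> c" unfolding c_def by auto
  have "0 \<le> (t *\<^sub>R y + x) \<bullet> (D *v (t *\<^sub>R y + x))"
    using assms(1) unfolding psd_def by blast
  also have "\<dots> = t\<^sup>2 * (y \<bullet> (D *v y)) + 2 * t * (y \<bullet> y)"
    unfolding sym_form_expand[OF sym] y_def[symmetric] assms(2)[folded y_def] by simp
  also have "\<dots> \<le> t\<^sup>2 * c + 2 * t * (y \<bullet> y)" using c by (simp add: mult_left_mono)
  also have "\<dots> = - ((y \<bullet> y)\<^sup>2 / c)" unfolding t_def using c by (simp add: field_simps power2_eq_square)
  also have "\<dots> < 0" using yy c by simp
  finally show False by simp
qed

lemma psd_form_nonpos_imp_zero:
  fixes D :: "real^'n^'n"
  assumes "psd D" and "\<And>x. x \<bullet> (D *v x) \<le> 0"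
  shows "D = 0"
proof -
  have "x \<bullet> (D *v x) = 0" for x
    using assms unfolding psd_def by (meson order_antisym)
  then have "D *v x = 0" for x by (rule psd_form_eq_0_imp_kernel[OF assms(1)])
  then show ?thesis by (simp add: matrix_eq)
qed

lemma psd_cauchy_schwarz:
  fixes S :: "real^'n^'n"
  assumes "psd S"
  shows "(u \<bullet> (S *v a))\<^sup>2 \<le> (u \<bullet> (S *v u)) * (a \<bullet> (S *v a))"
proof -
  have sym: "sym_mat S" using assms unfolding psd_def by simp
  have nonneg: "0 \<le> t\<^sup>2 * (a \<bullet> (S *v a)) + 2 * t * (a \<bullet> (S *v u)) + u \<bullet> (S *v u)" for t
    using assms unfolding psd_def sym_form_expand[OF sym, of t a u, symmetric] by blast
  have au: "a \<bullet> (S *v u) = u \<bullet> (S *v a)" by (rule sym_mat_inner_commute[OF sym])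
  show ?thesis
  proof (cases "a \<bullet> (S *v a) = 0")
    case True
    have "u \<bullet> (S *v a) = 0"
    proof (rule ccontr)
      assume ne: "u \<bullet> (S *v a) \<noteq> 0"
      define t where "t = - (\<bar>u \<bullet> (S *v u)\<bar> + 1) / (2 * (u \<bullet> (S *v a)))"
      have "0 \<le> 2 * t * (u \<bullet> (S *v a)) + u \<bullet> (S *v u)" using nonneg[of t] True au by simp
      also have "2 * t * (u \<bullet> (S *v a)) = - (\<bar>u \<bullet> (S *v u)\<bar> + 1)" using ne by (simp add: t_def)
      finally show False by linarith
    qed
    then show ?thesis using True by simp
  next
    case False
    then have pos: "0 < a \<bullet> (S *v a)" using assms unfolding psd_def by (metis order_le_less)
    define t where "t = - (u \<bullet> (S *v a)) / (a \<bullet> (S *v a))"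
    have "0 \<le> t\<^sup>2 * (a \<bullet> (S *v a)) + 2 * t * (a \<bullet> (S *v u)) + u \<bullet> (S *v u)" by (rule nonneg)
    also have "\<dots> = u \<bullet> (S *v u) - (u \<bullet> (S *v a))\<^sup>2 / (a \<bullet> (S *v a))"
      using pos au by (simp add: t_def field_simps power2_eq_square)
    finally show ?thesis using pos by (simp add: field_simps)
  qed
qed

lemma quadratic_form_le_norm:
  fixes A :: "real^'n^'n"
  shows "\<exists>M>0. \<forall>x. x \<bullet> (A *v x) \<le> M * (x \<bullet> x)"
proof -
  obtain B where B: "\<And>x. norm (A *v x) \<le> B * norm x"
    using linear_bounded[OF matrix_vector_mul_linear] by blast
  have "x \<bullet> (A *v x) \<le> (\<bar>B\<bar> + 1) * (x \<bullet> x)" for x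
  proof -
    have "x \<bullet> (A *v x) \<le> norm x * (B * norm x)"
      using norm_cauchy_schwarz[of x "A *v x"] B[of x] by (meson mult_left_mono norm_ge_zero order_trans)
    also have "\<dots> = B * (norm x)\<^sup>2" by (simp add: power2_eq_square)
    also have "\<dots> \<le> (\<bar>B\<bar> + 1) * (norm x)\<^sup>2" by (intro mult_right_mono) auto
    finally show ?thesis by (simp add: power2_norm_eq_inner)
  qed
  then show ?thesis by (intro exI[of _ "\<bar>B\<bar> + 1"]) auto
qed

lemma pos_def_form_ge_norm:
  fixes A :: "real^'n^'n"
  assumes "\<And>x. x \<noteq> 0 \<Longrightarrow> 0 < x \<bullet> (A *v x)"
  shows "\<exists>m>0. \<forall>x. m * (x \<bullet> x) \<le> x \<bullet> (A *v x)"
proof -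
  let ?S = "sphere (0::real^'n) 1"
  obtain i :: 'n where True by blast
  have "axis i 1 \<in> ?S" by simp
  then have "?S \<noteq> {}" by blast
  moreover have "continuous_on ?S (\<lambda>x. x \<bullet> (A *v x))"
    by (intro continuous_intros linear_continuous_on
        linear_conv_bounded_linear[THEN iffD1] matrix_vector_mul_linear)
  ultimately obtain x0 where x0: "x0 \<in> ?S" "\<And>y. y \<in> ?S \<Longrightarrow> x0 \<bullet> (A *v x0) \<le> y \<bullet> (A *v y)"
    using continuous_attains_inf[OF compact_sphere] by blast
  have "x0 \<bullet> (A *v x0) * (x \<bullet> x) \<le> x \<bullet> (A *v x)" for x
  proof (cases "x = 0")
    case False
    define y where "y = (1 / norm x) *\<^sub>R x"
    have "x0 \<bullet> (A *v x0) \<le> y \<bullet> (A *v y)" using False by (intro x0(2)) (simp add: y_def)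
    also have "y \<bullet> (A *v y) = (x \<bullet> (A *v x)) / (norm x)\<^sup>2"
      by (simp add: y_def matrix_vector_mult_scaleR power2_eq_square)
    finally show ?thesis using False by (simp add: field_simps power2_norm_eq_inner)
  qed simp
  moreover have "0 < x0 \<bullet> (A *v x0)" using x0(1) by (intro assms) auto
  ultimately show ?thesis by blast
qed

lemma sym_form_add_kernel:
  fixes N :: "real^'n^'n"
  assumes "sym_mat N" and "N *v x = 0"
  shows "(r *\<^sub>R x + v) \<bullet> (N *v (r *\<^sub>R x + v)) = v \<bullet> (N *v v)"
  using sym_form_expand[OF assms(1), of r x v] sym_mat_inner_commute[OF assms(1), of x v] assms(2)
  by simp

lemma nonpos_if_le_small_multiples:
  fixes a b e :: real
  assumes "0 < e" and small: "\<And>d. 0 < d \<Longrightarrow> d \<le> e \<Longrightarrow> a \<le> d * b"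
  shows "a \<le> 0"
proof (rule ccontr)
  assume "\<not> a \<le> 0"
  define d where "d = min e (a / (2 * \<bar>b\<bar> + 1))"
  have d: "0 < d" "d \<le> e" using \<open>\<not> a \<le> 0\<close> assms(1) unfolding d_def by auto
  have "d \<le> a / (2 * \<bar>b\<bar> + 1)" unfolding d_def by (rule min.cobounded2)
  then have "2 * (d * \<bar>b\<bar>) + d \<le> a" by (simp add: pos_le_divide_eq algebra_simps)
  moreover have "d * b \<le> d * \<bar>b\<bar>" using d(1) by (intro mult_left_mono) auto
  moreover have "0 \<le> d * \<bar>b\<bar>" using d(1) by simp
  ultimately show False using small[OF d] d(1) by linarith
qed

lemma quadratic_root_formula:
  fixes \<alpha> \<beta> \<gamma> d :: real
  assumes "\<alpha> \<noteq> 0" and "d\<^sup>2 = \<beta>\<^sup>2 - \<alpha> * \<gamma>"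
  shows "\<alpha> * ((- \<beta> + d) / \<alpha>)\<^sup>2 + 2 * \<beta> * ((- \<beta> + d) / \<alpha>) + \<gamma> = 0"
proof -
  have "\<alpha> * ((- \<beta> + d) / \<alpha>)\<^sup>2 + 2 * \<beta> * ((- \<beta> + d) / \<alpha>) + \<gamma>
          = (d\<^sup>2 - \<beta>\<^sup>2 + \<alpha> * \<gamma>) / \<alpha>"
    using assms(1) by (simp add: field_simps power2_eq_square)
  then show ?thesis using assms(2) by simp
qed

lemma sym_form_isotropic_combination:
  fixes N :: "real^'n^'n"
  assumes "sym_mat N" and "x \<bullet> (N *v x) \<noteq> 0"
    and "d\<^sup>2 = (x \<bullet> (N *v v))\<^sup>2 - (x \<bullet> (N *v x)) * (v \<bullet> (N *v v))"
  defines "r \<equiv> (- (x \<bullet> (N *v v)) + d) / (x \<bullet> (N *v x))"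
  shows "(r *\<^sub>R x + v) \<bullet> (N *v (r *\<^sub>R x + v)) = 0"
  using quadratic_root_formula[OF assms(2,3)] unfolding sym_form_expand[OF assms(1)] r_def
  by (simp add: algebra_simps)

lemma sym_form_isotropic_combination_exists:
  fixes N :: "real^'n^'n"
  assumes "sym_mat N" and "x \<bullet> (N *v x) < 0" and "0 \<le> v \<bullet> (N *v v)"
  shows "\<exists>r. (r *\<^sub>R x + v) \<bullet> (N *v (r *\<^sub>R x + v)) = 0"
proof -
  have "(x \<bullet> (N *v x)) * (v \<bullet> (N *v v)) \<le> 0"
    using assms(2,3) by (simp add: mult_nonpos_nonneg)
  then have "0 \<le> (x \<bullet> (N *v v))\<^sup>2 - (x \<bullet> (N *v x)) * (v \<bullet> (N *v v))"
    using zero_le_power2[of "x \<bullet> (N *v v)"] by linarith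
  then have "(sqrt ((x \<bullet> (N *v v))\<^sup>2 - (x \<bullet> (N *v x)) * (v \<bullet> (N *v v))))\<^sup>2
               = (x \<bullet> (N *v v))\<^sup>2 - (x \<bullet> (N *v x)) * (v \<bullet> (N *v v))"
    by simp
  from sym_form_isotropic_combination[OF assms(1) _ this] assms(2) show ?thesis by auto
qed

lemma sym_form_anisotropic_imp_definite:
  fixes N :: "real^'n^'n"
  assumes "sym_mat N" and "\<And>x. x \<noteq> 0 \<Longrightarrow> x \<bullet> (N *v x) \<noteq> 0"
  shows "(\<forall>x. x \<noteq> 0 \<longrightarrow> 0 < x \<bullet> (N *v x)) \<or> (\<forall>x. x \<noteq> 0 \<longrightarrow> x \<bullet> (N *v x) < 0)"
proof (rule ccontr)
  assume "\<not> ?thesis"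
  then obtain x v where x: "x \<noteq> 0" "x \<bullet> (N *v x) < 0" and v: "v \<noteq> 0" "0 < v \<bullet> (N *v v)"
    using assms(2) by (metis linorder_neqE_linordered_idom)
  obtain r where r: "(r *\<^sub>R x + v) \<bullet> (N *v (r *\<^sub>R x + v)) = 0"
    using sym_form_isotropic_combination_exists[OF assms(1) x(2)] v(2) by fastforce
  then have "r *\<^sub>R x + v = 0" using assms(2) by blast
  then have "v = - (r *\<^sub>R x)" by (simp add: eq_neg_iff_add_eq_0 add.commute)
  then have "v \<bullet> (N *v v) = r\<^sup>2 * (x \<bullet> (N *v x))"
    by (simp add: matrix_vector_mult_uminus_right matrix_vector_mult_scaleR power2_eq_square)
  also have "\<dots> \<le> 0" using x(2) by (simp add: mult_nonneg_nonpos)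
  finally show False using v(2) by simp
qed

text \<open>Both roots \<open>r\<close> of \<open>(r b + a)\<^sup>T N (r b + a) = 0\<close> give vectors \<open>r b + a\<close> in the kernel of \<open>D\<close>;
  their difference is a nonzero multiple of \<open>b\<close>.\<close>

lemma psd_kernel_contains_indefinite_pair:
  fixes N D :: "real^'n^'n"
  assumes N: "sym_mat N" and D: "psd D"
    and iso: "\<And>x. x \<bullet> (N *v x) = 0 \<Longrightarrow> x \<bullet> (D *v x) \<le> 0"
    and a: "0 < a \<bullet> (N *v a)" and b: "b \<bullet> (N *v b) < 0"
  shows "D *v a = 0" and "D *v b = 0"
proof -
  define d where "d = sqrt ((b \<bullet> (N *v a))\<^sup>2 - (b \<bullet> (N *v b)) * (a \<bullet> (N *v a)))"
  have "(b \<bullet> (N *v b)) * (a \<bullet> (N *v a)) < 0" using a b by (simp add: mult_neg_pos)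
  then have pos: "0 < (b \<bullet> (N *v a))\<^sup>2 - (b \<bullet> (N *v b)) * (a \<bullet> (N *v a))"
    by (smt (verit) zero_le_power2)
  then have d: "d\<^sup>2 = (b \<bullet> (N *v a))\<^sup>2 - (b \<bullet> (N *v b)) * (a \<bullet> (N *v a))"
    "(- d)\<^sup>2 = (b \<bullet> (N *v a))\<^sup>2 - (b \<bullet> (N *v b)) * (a \<bullet> (N *v a))" "0 < d"
    unfolding d_def by simp_all
  have kernel: "D *v (r *\<^sub>R b + a) = 0" if "(r *\<^sub>R b + a) \<bullet> (N *v (r *\<^sub>R b + a)) = 0" for r
    using iso[OF that] D psd_form_eq_0_imp_kernel[OF D] unfolding psd_def by (meson order_antisym)
  define r1 where "r1 = (- (b \<bullet> (N *v a)) + d) / (b \<bullet> (N *v b))"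
  define r2 where "r2 = (- (b \<bullet> (N *v a)) + - d) / (b \<bullet> (N *v b))"
  have k1: "D *v (r1 *\<^sub>R b + a) = 0"
    unfolding r1_def using b by (intro kernel sym_form_isotropic_combination[OF N _ d(1)]) simp
  have k2: "D *v (r2 *\<^sub>R b + a) = 0"
    unfolding r2_def using b by (intro kernel sym_form_isotropic_combination[OF N _ d(2)]) simp
  have "r1 \<noteq> r2" unfolding r1_def r2_def using b d(3) by (simp add: field_simps)
  have "(r1 - r2) *\<^sub>R (D *v b) = D *v (r1 *\<^sub>R b + a) - D *v (r2 *\<^sub>R b + a)"
    by (simp add: matrix_vector_right_distrib matrix_vector_mult_scaleR algebra_simps)
  with k1 k2 \<open>r1 \<noteq> r2\<close> show Db: "D *v b = 0" by simp
  with k1 show "D *v a = 0" by (simp add: matrix_vector_right_distrib matrix_vector_mult_scaleR)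
qed

lemma psd_nonpos_if_nonpos_on_isotropic_cone:
  fixes N D :: "real^'n^'n"
  assumes N: "sym_mat N" and D: "psd D"
    and iso: "\<And>x. x \<bullet> (N *v x) = 0 \<Longrightarrow> x \<bullet> (D *v x) \<le> 0"
    and "0 < e \<bullet> (N *v e)" and "f \<bullet> (N *v f) < 0"
  shows "v \<bullet> (D *v v) \<le> 0"
proof -
  consider "v \<bullet> (N *v v) = 0" | "0 < v \<bullet> (N *v v)" | "v \<bullet> (N *v v) < 0" by linarith
  then show ?thesis
  proof cases
    case 1
    then show ?thesis by (rule iso)
  next
    case 2
    show ?thesis using psd_kernel_contains_indefinite_pair(1)[OF N D iso 2 assms(5)] by simp
  next
    case 3
    show ?thesis using psd_kernel_contains_indefinite_pair(2)[OF N D iso assms(4) 3] by simp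
  qed
qed

section \<open>Ellipsoids and inverse forms\<close>

lemma inv_form_ge:
  fixes C :: "real^'n^'n"
  assumes "spd C"
  shows "2 * (x \<bullet> y) - y \<bullet> (C *v y) \<le> x \<bullet> (matrix_inv C *v x)"
proof -
  define z where "z = matrix_inv C *v x"
  have Cz: "C *v z = x" unfolding z_def using matrix_inv_mult_vector(1)[OF spd_invertible[OF assms]] .
  have "0 \<le> (y - z) \<bullet> (C *v (y - z))" using spd_nonneg[OF assms] .
  also have "\<dots> = y \<bullet> (C *v y) - 2 * (y \<bullet> (C *v z)) + z \<bullet> (C *v z)"
    using sym_mat_inner_commute[OF spd_sym[OF assms], of y z]
    by (simp add: matrix_vector_mult_diff_distrib inner_diff_left inner_diff_right)
  finally show ?thesis
    unfolding Cz using inner_commute[of y x] inner_commute[of z x] unfolding z_def by linarith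
qed

lemma inv_form_eq:
  fixes C :: "real^'n^'n" and x :: "real^'n"
  assumes "spd C"
  defines "z \<equiv> matrix_inv C *v x"
  shows "x \<bullet> (matrix_inv C *v x) = 2 * (x \<bullet> z) - z \<bullet> (C *v z)"
  using matrix_inv_mult_vector(1)[OF spd_invertible[OF assms(1)]] unfolding z_def
  by (simp add: inner_commute)

lemma sublevel_subset_imp_form_le:
  fixes A B :: "real^'n^'n"
  assumes A: "spd A" and sub: "{x. x \<bullet> (A *v x) \<le> 1} \<subseteq> {x. x \<bullet> (B *v x) \<le> 1}"
  shows "x \<bullet> (B *v x) \<le> x \<bullet> (A *v x)"
proof (cases "x = 0")
  case False
  define t where "t = x \<bullet> (A *v x)"
  have t: "0 < t" unfolding t_def using spd_pos[OF A False] .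
  define y where "y = (1 / sqrt t) *\<^sub>R x"
  have scale: "y \<bullet> (M *v y) = (x \<bullet> (M *v x)) / t" for M :: "real^'n^'n"
    unfolding y_def using t by (simp add: matrix_vector_mult_scaleR power2_eq_square[symmetric])
  have "y \<bullet> (A *v y) \<le> 1" unfolding scale t_def[symmetric] using t by simp
  then have "y \<bullet> (B *v y) \<le> 1" using sub by blast
  then show ?thesis using t unfolding scale t_def[symmetric] by (simp add: field_simps)
qed simp

lemma ellipsoid_subset_imp_inv_form_le:
  fixes P1 P2 :: "real^'n^'n"
  assumes "spd P1" and "ellipsoid P1 \<subseteq> ellipsoid P2"
  shows "x \<bullet> (matrix_inv P2 *v x) \<le> x \<bullet> (matrix_inv P1 *v x)"
  using sublevel_subset_imp_form_le[OF spd_matrix_inv[OF assms(1)]] assms(2)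
  unfolding ellipsoid_def by blast

lemma quadratic_form_le_const_pos_def_form:
  fixes A P :: "real^'n^'n"
  assumes "spd P"
  shows "\<exists>c>0. \<forall>y. y \<bullet> (A *v y) \<le> c * (y \<bullet> (P *v y))"
proof -
  obtain M where M: "0 < M" "\<And>y. y \<bullet> (A *v y) \<le> M * (y \<bullet> y)"
    using quadratic_form_le_norm by blast
  obtain m where m: "0 < m" "\<And>y. m * (y \<bullet> y) \<le> y \<bullet> (P *v y)"
    using pos_def_form_ge_norm[of P] spd_pos[OF assms] by blast
  have "y \<bullet> (A *v y) \<le> M / m * (y \<bullet> (P *v y))" for y
  proof -
    have "y \<bullet> (A *v y) \<le> M / m * (m * (y \<bullet> y))" using M(2)[of y] m(1) by simp
    also have "\<dots> \<le> M / m * (y \<bullet> (P *v y))" using m M(1) by (intro mult_left_mono) auto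
    finally show ?thesis .
  qed
  then show ?thesis using M(1) m(1) by (intro exI[of _ "M / m"]) auto
qed

section \<open>The inverse pencil \<open>(P + s Q)\<inverse>\<close>\<close>

locale spd_pencil =
  fixes P Q :: "real^'n^'n"
  assumes P: "spd P" and Q: "spd Q"
begin

definition pinv :: "real \<Rightarrow> real^'n^'n" where
  "pinv s = matrix_inv (P + s *\<^sub>R Q)"

lemma pinv_spd: "0 \<le> s \<Longrightarrow> spd (pinv s)"
  unfolding pinv_def by (intro spd_matrix_inv spd_add_scaleR P Q)

lemma pinv_sym: "0 \<le> s \<Longrightarrow> sym_mat (pinv s)"
  using spd_sym[OF pinv_spd] .

lemma pinv_solves: "0 \<le> s \<Longrightarrow> P *v (pinv s *v x) + s *\<^sub>R (Q *v (pinv s *v x)) = x"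
  using matrix_inv_mult_vector(1)[OF spd_invertible[OF spd_add_scaleR[OF P Q]], of s x]
  by (simp add: pinv_def matrix_vector_mult_add_rdistrib scaleR_matrix_vector_assoc[symmetric])

lemma pinv_unique:
  assumes "0 \<le> s" and "P *v a + s *\<^sub>R (Q *v a) = x"
  shows "a = pinv s *v x"
proof -
  have "(P + s *\<^sub>R Q) *v a = x"
    using assms(2) by (simp add: matrix_vector_mult_add_rdistrib scaleR_matrix_vector_assoc[symmetric])
  then show ?thesis
    unfolding pinv_def using matrix_inv_mult_vector(2)[OF spd_invertible[OF spd_add_scaleR[OF P Q assms(1)]]]
    by metis
qed

lemma pinv_eq_0_imp: "0 \<le> s \<Longrightarrow> pinv s *v x = 0 \<Longrightarrow> x = 0"
  using pinv_solves[of s x] by simp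

definition slope :: "real \<Rightarrow> real^'n \<Rightarrow> real" where
  "slope s x = (pinv s *v x) \<bullet> (P *v (pinv s *v x))"

definition curvature :: "real \<Rightarrow> real \<Rightarrow> real^'n \<Rightarrow> real" where
  "curvature s1 s2 x = (pinv s1 *v x) \<bullet> (P *v (pinv s2 *v (Q *v (pinv s1 *v x))))"

lemma weighted_form_increment:
  assumes s1: "0 \<le> s1" and s2: "0 \<le> s2"
  shows "s2 * (x \<bullet> (pinv s2 *v x)) - s1 * (x \<bullet> (pinv s1 *v x))
           = (s2 - s1) * slope s1 x - (s2 - s1)\<^sup>2 * curvature s1 s2 x"
proof -
  define a1 where "a1 = pinv s1 *v x"
  define a2 where "a2 = pinv s2 *v x"
  define f where "f = pinv s2 *v (Q *v a1)"
  have e1: "P *v a1 + s1 *\<^sub>R (Q *v a1) = x" unfolding a1_def by (rule pinv_solves[OF s1])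
  have e2: "P *v a2 + s2 *\<^sub>R (Q *v a2) = x" unfolding a2_def by (rule pinv_solves[OF s2])
  have ef: "P *v f + s2 *\<^sub>R (Q *v f) = Q *v a1" unfolding f_def by (rule pinv_solves[OF s2])
  have sP: "u \<bullet> (P *v v) = v \<bullet> (P *v u)" for u v by (rule sym_mat_inner_commute[OF spd_sym[OF P]])
  have sQ: "u \<bullet> (Q *v v) = v \<bullet> (Q *v u)" for u v by (rule sym_mat_inner_commute[OF spd_sym[OF Q]])
  have "P *v (a1 - (s2 - s1) *\<^sub>R f) + s2 *\<^sub>R (Q *v (a1 - (s2 - s1) *\<^sub>R f))
          = P *v a1 + s2 *\<^sub>R (Q *v a1) - (s2 - s1) *\<^sub>R (P *v f + s2 *\<^sub>R (Q *v f))"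
    by (simp add: matrix_vector_mult_diff_distrib matrix_vector_mult_scaleR algebra_simps)
  also have "\<dots> = x" unfolding ef e1[symmetric] by (simp add: algebra_simps)
  finally have a2f: "a2 = a1 - (s2 - s1) *\<^sub>R f" unfolding a2_def using pinv_unique[OF s2] by metis
  have xa2: "x \<bullet> a2 = a1 \<bullet> (P *v a2) + s1 * (a1 \<bullet> (Q *v a2))"
    unfolding e1[symmetric] inner_add_left inner_scaleR_left sP[of _ a2] sQ[of _ a2]
    by (simp add: inner_commute)
  have xa1: "x \<bullet> a1 = a1 \<bullet> (P *v a2) + s2 * (a1 \<bullet> (Q *v a2))"
    unfolding e2[symmetric] inner_add_left inner_scaleR_left by (simp add: inner_commute)
  have "s2 * (x \<bullet> (pinv s2 *v x)) - s1 * (x \<bullet> (pinv s1 *v x)) = s2 * (x \<bullet> a2) - s1 * (x \<bullet> a1)"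
    unfolding a1_def a2_def ..
  also have "\<dots> = (s2 - s1) * (a1 \<bullet> (P *v a2))"
    unfolding xa2 xa1 by (simp add: algebra_simps)
  also have "a1 \<bullet> (P *v a2) = slope s1 x - (s2 - s1) * curvature s1 s2 x"
    unfolding slope_def curvature_def a1_def[symmetric] f_def[symmetric] a2f
    by (simp add: matrix_vector_mult_diff_distrib matrix_vector_mult_scaleR inner_diff_right)
  finally show ?thesis by (simp add: algebra_simps power2_eq_square)
qed

lemma curvature_eq:
  fixes x :: "real^'n"
  assumes s1: "0 \<le> s1" and s2: "0 \<le> s2"
  defines "a \<equiv> pinv s1 *v x" and "f \<equiv> pinv s2 *v (Q *v (pinv s1 *v x))"
  shows "curvature s1 s2 x = (a - s2 *\<^sub>R f) \<bullet> (Q *v (a - s2 *\<^sub>R f)) + s2 * (f \<bullet> (P *v f))"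
    and "curvature s1 s2 x = a \<bullet> (Q *v a) - s2 * (f \<bullet> (P *v f)) - s2\<^sup>2 * (f \<bullet> (Q *v f))"
proof -
  have ef: "P *v f + s2 *\<^sub>R (Q *v f) = Q *v a" unfolding f_def a_def by (rule pinv_solves[OF s2])
  have r: "curvature s1 s2 x = a \<bullet> (P *v f)" unfolding curvature_def a_def f_def ..
  have i1: "a \<bullet> (Q *v a) = a \<bullet> (P *v f) + s2 * (a \<bullet> (Q *v f))"
    unfolding ef[symmetric] by (simp add: inner_add_right)
  have i2: "f \<bullet> (Q *v a) = f \<bullet> (P *v f) + s2 * (f \<bullet> (Q *v f))"
    unfolding ef[symmetric] by (simp add: inner_add_right)
  have i3: "a \<bullet> (Q *v f) = f \<bullet> (Q *v a)" by (rule sym_mat_inner_commute[OF spd_sym[OF Q]])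
  show "curvature s1 s2 x = a \<bullet> (Q *v a) - s2 * (f \<bullet> (P *v f)) - s2\<^sup>2 * (f \<bullet> (Q *v f))"
    unfolding r using i1 i2 i3 by (simp add: algebra_simps power2_eq_square)
  moreover have "(a - s2 *\<^sub>R f) \<bullet> (Q *v (a - s2 *\<^sub>R f))
                   = a \<bullet> (Q *v a) - 2 * s2 * (a \<bullet> (Q *v f)) + s2\<^sup>2 * (f \<bullet> (Q *v f))"
    using i3 sym_mat_inner_commute[OF spd_sym[OF Q], of a f]
    by (simp add: matrix_vector_mult_diff_distrib matrix_vector_mult_scaleR inner_diff_left
        inner_diff_right algebra_simps power2_eq_square)
  ultimately show "curvature s1 s2 x = (a - s2 *\<^sub>R f) \<bullet> (Q *v (a - s2 *\<^sub>R f)) + s2 * (f \<bullet> (P *v f))"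
    using i2 i3 by (simp add: algebra_simps power2_eq_square)
qed

lemma curvature_nonneg: "0 \<le> s1 \<Longrightarrow> 0 \<le> s2 \<Longrightarrow> 0 \<le> curvature s1 s2 x"
  using curvature_eq(1)[of s1 s2 x] spd_nonneg[OF P] spd_nonneg[OF Q] by simp

lemma curvature_pos:
  assumes s1: "0 \<le> s1" and s2: "0 \<le> s2" and x: "x \<noteq> 0"
  shows "0 < curvature s1 s2 x"
proof -
  define a where "a = pinv s1 *v x"
  define f where "f = pinv s2 *v (Q *v (pinv s1 *v x))"
  have a: "a \<noteq> 0" using pinv_eq_0_imp[OF s1] x unfolding a_def by blast
  have "0 < (a - s2 *\<^sub>R f) \<bullet> (Q *v (a - s2 *\<^sub>R f)) + s2 * (f \<bullet> (P *v f))"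
  proof (cases "a - s2 *\<^sub>R f = 0")
    case False
    have "0 \<le> s2 * (f \<bullet> (P *v f))" using s2 spd_nonneg[OF P] by simp
    then show ?thesis using spd_pos[OF Q False] by linarith
  next
    case True
    then have "s2 \<noteq> 0" "f \<noteq> 0" using a by auto
    then show ?thesis using True s2 spd_pos[OF P] by simp
  qed
  then show ?thesis unfolding curvature_eq(1)[OF s1 s2] a_def f_def .
qed

lemma curvature_le:
  assumes "0 \<le> s1" and "0 \<le> s2"
  shows "curvature s1 s2 x \<le> (pinv s1 *v x) \<bullet> (Q *v (pinv s1 *v x))"
  using curvature_eq(2)[OF assms, of x] assms spd_nonneg[OF P] spd_nonneg[OF Q]
  by (smt (verit) mult_nonneg_nonneg zero_le_power2)

lemma slope_diff:
  assumes "0 \<le> s1" and "0 \<le> s2"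
  shows "slope s1 x - slope s2 x = (s2 - s1) * (curvature s1 s2 x + curvature s2 s1 x)"
proof (cases "s1 = s2")
  case False
  have "(s2 - s1) * (slope s1 x - slope s2 x)
          = (s2 - s1) * ((s2 - s1) * (curvature s1 s2 x + curvature s2 s1 x))"
    using weighted_form_increment[OF assms, of x] weighted_form_increment[OF assms(2,1), of x]
    by (simp add: algebra_simps power2_eq_square)
  then show ?thesis using False by simp
qed simp

lemma slope_antimono:
  assumes "0 \<le> s1" and "s1 \<le> s2"
  shows "slope s2 x \<le> slope s1 x"
proof -
  have "0 \<le> (s2 - s1) * (curvature s1 s2 x + curvature s2 s1 x)"
    using assms curvature_nonneg[of s1 s2 x] curvature_nonneg[of s2 s1 x] by simp
  then show ?thesis using slope_diff[of s1 s2 x] assms by simp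
qed

lemma slope_strict_antimono:
  assumes "0 \<le> s1" and "s1 < s2" and "x \<noteq> 0"
  shows "slope s2 x < slope s1 x"
proof -
  have "0 < (s2 - s1) * (curvature s1 s2 x + curvature s2 s1 x)"
    using assms curvature_pos[of s1 s2 x] curvature_nonneg[of s2 s1 x] by simp
  then show ?thesis using slope_diff[of s1 s2 x] assms by simp
qed

definition slope_mat :: "real \<Rightarrow> real^'n^'n" where
  "slope_mat s = pinv s ** P ** pinv s"

lemma slope_mat_sym: "0 \<le> s \<Longrightarrow> sym_mat (slope_mat s)"
  using pinv_sym[of s] spd_sym[OF P] unfolding slope_mat_def sym_mat_def
  by (simp add: matrix_transpose_mul matrix_mul_assoc)

lemma slope_eq_form: "0 \<le> s \<Longrightarrow> slope s x = x \<bullet> (slope_mat s *v x)"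
  unfolding slope_def slope_mat_def
  by (simp add: matrix_vector_mul_assoc[symmetric] sym_mat_inner_commute[OF pinv_sym, of s x]
      inner_commute)

lemma curvature_le_norm: "\<exists>M>0. \<forall>s1 s2 x. 0 \<le> s1 \<longrightarrow> 0 \<le> s2 \<longrightarrow> curvature s1 s2 x \<le> M * (x \<bullet> x)"
proof -
  obtain c where c: "0 < c" "\<And>y. y \<bullet> (Q *v y) \<le> c * (y \<bullet> (P *v y))"
    using quadratic_form_le_const_pos_def_form[OF P] by blast
  obtain M where M: "0 < M" "\<And>x. x \<bullet> (slope_mat 0 *v x) \<le> M * (x \<bullet> x)"
    using quadratic_form_le_norm by blast
  have "curvature s1 s2 x \<le> (c * M) * (x \<bullet> x)" if "0 \<le> s1" "0 \<le> s2" for s1 s2 x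
  proof -
    have "curvature s1 s2 x \<le> c * slope s1 x"
      using curvature_le[OF that] c(2) unfolding slope_def by (meson order_trans)
    also have "\<dots> \<le> c * slope 0 x" using slope_antimono[of 0 s1 x] that c(1) by simp
    also have "\<dots> \<le> c * (M * (x \<bullet> x))" using M(2)[of x] c(1) by (simp add: slope_eq_form)
    finally show ?thesis by simp
  qed
  then show ?thesis using c(1) M(1) by (intro exI[of _ "c * M"]) auto
qed

lemma slope_decrease_le:
  "\<exists>K>0. \<forall>s1 s2 x. 0 \<le> s1 \<longrightarrow> s1 \<le> s2 \<longrightarrow> slope s1 x - slope s2 x \<le> K * (s2 - s1) * (x \<bullet> x)"
proof -
  obtain M where M: "0 < M" "\<And>s1 s2 x. 0 \<le> s1 \<Longrightarrow> 0 \<le> s2 \<Longrightarrow> curvature s1 s2 x \<le> M * (x \<bullet> x)"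
    using curvature_le_norm by blast
  have "slope s1 x - slope s2 x \<le> (2 * M) * (s2 - s1) * (x \<bullet> x)" if "0 \<le> s1" "s1 \<le> s2" for s1 s2 x
  proof -
    have "curvature s1 s2 x + curvature s2 s1 x \<le> 2 * M * (x \<bullet> x)"
      using M(2)[of s1 s2 x] M(2)[of s2 s1 x] that by simp
    then have "(s2 - s1) * (curvature s1 s2 x + curvature s2 s1 x) \<le> (s2 - s1) * (2 * M * (x \<bullet> x))"
      using that by (intro mult_left_mono) auto
    then show ?thesis using slope_diff[of s1 s2 x] that by (simp add: algebra_simps)
  qed
  then show ?thesis using M(1) by (intro exI[of _ "2 * M"]) auto
qed

end

section \<open>The SCI information form as a function of the weight\<close>

locale sci =
  fixes PA PB QA QB :: "real^'n^'n"
  assumes PA: "spd PA" and PB: "spd PB" and QA: "spd QA" and QB: "spd QB"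
begin

sublocale A: spd_pencil PA QA using PA QA by unfold_locales
sublocale B: spd_pencil PB QB using PB QB by unfold_locales

abbreviation H :: "real \<Rightarrow> real^'n^'n" where
  "H \<equiv> H_SCI PA PB QA QB"

abbreviation h :: "real \<Rightarrow> real^'n \<Rightarrow> real" where
  "h w x \<equiv> x \<bullet> (H w *v x)"

lemma H_eq: "H w = w *\<^sub>R A.pinv w + (1 - w) *\<^sub>R B.pinv (1 - w)"
  unfolding H_SCI_def A.pinv_def B.pinv_def ..

lemma h_eq: "h w x = w * (x \<bullet> (A.pinv w *v x)) + (1 - w) * (x \<bullet> (B.pinv (1 - w) *v x))"
  unfolding H_eq
  by (simp add: matrix_vector_mult_add_rdistrib scaleR_matrix_vector_assoc[symmetric] inner_add_right)

lemma H_spd: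
  assumes "0 \<le> w" and "w \<le> 1"
  shows "spd (H w)"
  unfolding spd_def
proof (intro conjI allI impI)
  show "sym_mat (H w)"
    unfolding H_eq using A.pinv_sym[of w] B.pinv_sym[of "1 - w"] assms
    by (intro sym_mat_add sym_mat_scaleR) auto
  fix x :: "real^'n"
  assume x: "x \<noteq> 0"
  have a: "0 < x \<bullet> (A.pinv w *v x)" using spd_pos[OF A.pinv_spd x] assms by simp
  have b: "0 < x \<bullet> (B.pinv (1 - w) *v x)" using spd_pos[OF B.pinv_spd x] assms by simp
  show "0 < h w x"
  proof (cases "w = 0")
    case False
    then have "0 < w * (x \<bullet> (A.pinv w *v x))" using a assms by simp
    moreover have "0 \<le> (1 - w) * (x \<bullet> (B.pinv (1 - w) *v x))" using b assms by simp
    ultimately show ?thesis unfolding h_eq by linarith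
  qed (use b in \<open>simp add: h_eq\<close>)
qed

definition h_slope :: "real \<Rightarrow> real^'n \<Rightarrow> real" where
  "h_slope w x = A.slope w x - B.slope (1 - w) x"

definition h_slope_mat :: "real \<Rightarrow> real^'n^'n" where
  "h_slope_mat w = A.slope_mat w - B.slope_mat (1 - w)"

lemma h_slope_mat_sym: "0 \<le> w \<Longrightarrow> w \<le> 1 \<Longrightarrow> sym_mat (h_slope_mat w)"
  unfolding h_slope_mat_def using A.slope_mat_sym[of w] B.slope_mat_sym[of "1 - w"]
  by (intro sym_mat_diff) auto

lemma h_slope_eq_form: "0 \<le> w \<Longrightarrow> w \<le> 1 \<Longrightarrow> h_slope w x = x \<bullet> (h_slope_mat w *v x)"
  unfolding h_slope_def h_slope_mat_def using A.slope_eq_form[of w x] B.slope_eq_form[of "1 - w" x]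
  by (simp add: matrix_vector_mult_diff_rdistrib inner_diff_right)

definition h_curvature :: "real \<Rightarrow> real \<Rightarrow> real^'n \<Rightarrow> real" where
  "h_curvature w1 w2 x = A.curvature w1 w2 x + B.curvature (1 - w1) (1 - w2) x"

lemma h_increment:
  assumes "0 \<le> w1" "w1 \<le> 1" "0 \<le> w2" "w2 \<le> 1"
  shows "h w2 x - h w1 x = (w2 - w1) * h_slope w1 x - (w2 - w1)\<^sup>2 * h_curvature w1 w2 x"
  using A.weighted_form_increment[of w1 w2 x] B.weighted_form_increment[of "1 - w1" "1 - w2" x] assms
  unfolding h_eq h_slope_def h_curvature_def by (simp add: algebra_simps power2_eq_square)

lemma h_increment_le:
  assumes "0 \<le> w1" "w1 \<le> 1" "0 \<le> w2" "w2 \<le> 1"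
  shows "h w2 x - h w1 x \<le> (w2 - w1) * h_slope w1 x"
proof -
  have "0 \<le> h_curvature w1 w2 x"
    unfolding h_curvature_def using assms A.curvature_nonneg B.curvature_nonneg by simp
  then show ?thesis using h_increment[OF assms, of x] by simp
qed

lemma h_slope_strict_antimono:
  assumes "0 \<le> w1" "w1 < w2" "w2 \<le> 1" "x \<noteq> 0"
  shows "h_slope w2 x < h_slope w1 x"
  using A.slope_strict_antimono[of w1 w2 x] B.slope_antimono[of "1 - w2" "1 - w1" x] assms
  unfolding h_slope_def by simp

lemma h_slope_decrease_le:
  "\<exists>K>0. \<forall>w1 w2 x. 0 \<le> w1 \<longrightarrow> w1 \<le> w2 \<longrightarrow> w2 \<le> 1 \<longrightarrow>
     h_slope w1 x - h_slope w2 x \<le> K * (w2 - w1) * (x \<bullet> x)"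
proof -
  obtain KA where KA: "0 < KA"
    "\<And>s1 s2 x. 0 \<le> s1 \<Longrightarrow> s1 \<le> s2 \<Longrightarrow> A.slope s1 x - A.slope s2 x \<le> KA * (s2 - s1) * (x \<bullet> x)"
    using A.slope_decrease_le by blast
  obtain KB where KB: "0 < KB"
    "\<And>s1 s2 x. 0 \<le> s1 \<Longrightarrow> s1 \<le> s2 \<Longrightarrow> B.slope s1 x - B.slope s2 x \<le> KB * (s2 - s1) * (x \<bullet> x)"
    using B.slope_decrease_le by blast
  have "h_slope w1 x - h_slope w2 x \<le> (KA + KB) * (w2 - w1) * (x \<bullet> x)"
    if "0 \<le> w1" "w1 \<le> w2" "w2 \<le> 1" for w1 w2 x
    using KA(2)[of w1 w2 x] KB(2)[of "1 - w2" "1 - w1" x] that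
    unfolding h_slope_def by (simp add: algebra_simps)
  then show ?thesis using KA(1) KB(1) by (intro exI[of _ "KA + KB"]) auto
qed

definition dominated :: "real \<Rightarrow> bool" where
  "dominated w \<longleftrightarrow> (\<exists>w2. 0 \<le> w2 \<and> w2 \<le> 1 \<and> (\<forall>x. x \<noteq> 0 \<longrightarrow> h w x < h w2 x))"

lemma dominated_if_slope_pos_def:
  assumes w: "0 \<le> w" "w < 1" and pos: "\<And>x. x \<noteq> 0 \<Longrightarrow> 0 < h_slope w x"
  shows "dominated w"
proof -
  obtain m where m: "0 < m" "\<And>x. m * (x \<bullet> x) \<le> h_slope w x"
    using pos_def_form_ge_norm[of "h_slope_mat w"] pos h_slope_eq_form w by auto
  obtain MA where MA: "0 < MA" "\<And>s1 s2 x. 0 \<le> s1 \<Longrightarrow> 0 \<le> s2 \<Longrightarrow> A.curvature s1 s2 x \<le> MA * (x \<bullet> x)"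
    using A.curvature_le_norm by blast
  obtain MB where MB: "0 < MB" "\<And>s1 s2 x. 0 \<le> s1 \<Longrightarrow> 0 \<le> s2 \<Longrightarrow> B.curvature s1 s2 x \<le> MB * (x \<bullet> x)"
    using B.curvature_le_norm by blast
  define M where "M = MA + MB"
  define d where "d = min (1 - w) (m / (2 * M))"
  have M: "0 < M" unfolding M_def using MA MB by simp
  have d: "0 < d" "d \<le> 1 - w" "d * M \<le> m / 2"
    using m M w unfolding d_def by (auto simp: min_def field_simps)
  have "h w x < h (w + d) x" if x: "x \<noteq> 0" for x
  proof -
    have curv: "h_curvature w (w + d) x \<le> M * (x \<bullet> x)"
      unfolding h_curvature_def M_def using MA(2)[of w "w + d" x] MB(2)[of "1 - w" "1 - (w + d)" x] w d
      by (simp add: algebra_simps)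
    have "d * (m * (x \<bullet> x)) \<le> d * h_slope w x" using m(2)[of x] d by (intro mult_left_mono) auto
    moreover have "d\<^sup>2 * h_curvature w (w + d) x \<le> d\<^sup>2 * (M * (x \<bullet> x))"
      using curv by (intro mult_left_mono) auto
    moreover have "h (w + d) x - h w x = d * h_slope w x - d\<^sup>2 * h_curvature w (w + d) x"
      using h_increment[of w "w + d" x] w d by simp
    moreover have "d * (x \<bullet> x) * (m - d * M) = d * (m * (x \<bullet> x)) - d\<^sup>2 * (M * (x \<bullet> x))"
      by (simp add: algebra_simps power2_eq_square)
    ultimately have "d * (x \<bullet> x) * (m - d * M) \<le> h (w + d) x - h w x" by linarith
    moreover have "0 < d * (x \<bullet> x) * (m - d * M)" using d x m by simp
    ultimately show ?thesis by linarith
  qed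
  then show ?thesis unfolding dominated_def using w d by (intro exI[of _ "w + d"]) auto
qed

text \<open>Exchanging the roles of the two estimates replaces \<open>w\<close> by \<open>1 - w\<close> and negates the slope.\<close>

lemma swap_H: "H_SCI PB PA QB QA s = H (1 - s)"
  by (simp add: H_SCI_def add.commute)

lemma swap_h_slope: "sci.h_slope PB PA QB QA s x = - h_slope (1 - s) x"
proof -
  interpret swap: sci PB PA QB QA using PA PB QA QB by unfold_locales
  show ?thesis unfolding swap.h_slope_def h_slope_def by simp
qed

lemma dominated_if_slope_neg_def:
  assumes w: "0 < w" "w \<le> 1" and neg: "\<And>x. x \<noteq> 0 \<Longrightarrow> h_slope w x < 0"
  shows "dominated w"
proof -
  interpret swap: sci PB PA QB QA using PA PB QA QB by unfold_locales
  have "swap.dominated (1 - w)"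
    using w neg by (intro swap.dominated_if_slope_pos_def) (auto simp: swap_h_slope)
  then obtain w2 where "0 \<le> w2" "w2 \<le> 1" "\<forall>x. x \<noteq> 0 \<longrightarrow> h w x < h (1 - w2) x"
    unfolding swap.dominated_def swap_H by auto
  then show ?thesis unfolding dominated_def by (intro exI[of _ "1 - w2"]) auto
qed

text \<open>Let \<open>x1 \<noteq> 0\<close> be isotropic for the semidefinite form \<open>q(w, \<cdot>)\<close>. For small \<open>d > 0\<close>,
  \<open>q(w + d, \<cdot>)\<close> is negative at \<open>x1\<close> but still nonnegative at \<open>v\<close>, so some \<open>y = r x1 + v\<close> is
  isotropic for it. Since \<open>x1\<close> lies in the kernels of \<open>D\<close> and of \<open>q(w, \<cdot>)\<close>, the hypothesis at \<open>y\<close>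
  and concavity give \<open>D(v) = D(y) \<le> d q(w, y) = d q(w, v)\<close>.\<close>

lemma excess_nonpos_right:
  assumes w: "0 \<le> w" "w < 1" and slope_psd: "\<And>x. 0 \<le> h_slope w x"
    and x1: "x1 \<noteq> 0" "h_slope w x1 = 0" and D: "psd D"
    and bound: "\<And>w2 x. w \<le> w2 \<Longrightarrow> w2 < 1 \<Longrightarrow> h_slope w2 x = 0 \<Longrightarrow> x \<bullet> (D *v x) \<le> h w2 x - h w x"
  shows "v \<bullet> (D *v v) \<le> 0"
proof (cases "h_slope w v = 0")
  case True
  then show ?thesis using bound[of w v] w by simp
next
  case False
  then have qv: "0 < h_slope w v" using slope_psd by (metis order_le_less)
  have w1: "w \<le> 1" using w by simp
  have "x1 \<bullet> (D *v x1) \<le> 0" using bound[of w x1] x1(2) w by simp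
  then have "D *v x1 = 0"
    using D psd_form_eq_0_imp_kernel[OF D] unfolding psd_def by (meson order_antisym)
  then have D_shift: "(r *\<^sub>R x1 + v) \<bullet> (D *v (r *\<^sub>R x1 + v)) = v \<bullet> (D *v v)" for r
    using D unfolding psd_def by (simp add: sym_form_add_kernel)
  have "psd (h_slope_mat w)"
    unfolding psd_def using h_slope_mat_sym[OF w(1) w1] slope_psd h_slope_eq_form[OF w(1) w1] by simp
  then have "h_slope_mat w *v x1 = 0"
    using psd_form_eq_0_imp_kernel x1(2) h_slope_eq_form[OF w(1) w1] by simp
  then have slope_shift: "h_slope w (r *\<^sub>R x1 + v) = h_slope w v" for r
    using h_slope_mat_sym[OF w(1) w1] h_slope_eq_form[OF w(1) w1] by (simp add: sym_form_add_kernel)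
  obtain K where K: "\<And>w1 w2. 0 \<le> w1 \<Longrightarrow> w1 \<le> w2 \<Longrightarrow> w2 \<le> 1 \<Longrightarrow>
      h_slope w1 v - h_slope w2 v \<le> K * (w2 - w1) * (v \<bullet> v)"
    using h_slope_decrease_le by blast
  define e where "e = min ((1 - w) / 2) (h_slope w v / (\<bar>K * (v \<bullet> v)\<bar> + 1))"
  have "0 < e" unfolding e_def using w qv by simp
  moreover have "v \<bullet> (D *v v) \<le> d * h_slope w v" if d: "0 < d" "d \<le> e" for d
  proof -
    define w2 where "w2 = w + d"
    have w2: "w < w2" "w2 < 1" using d w unfolding w2_def e_def by auto
    have "d * (\<bar>K * (v \<bullet> v)\<bar> + 1) \<le> h_slope w v"
      using d qv unfolding e_def by (simp add: field_simps)
    moreover have "h_slope w v - h_slope w2 v \<le> d * \<bar>K * (v \<bullet> v)\<bar>"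
      using K[of w w2] w w2 d unfolding w2_def
      by (smt (verit, best) abs_ge_self mult.assoc mult.commute mult_left_mono)
    ultimately have "0 \<le> v \<bullet> (h_slope_mat w2 *v v)"
      using d h_slope_eq_form[of w2 v] w2 w by (simp add: algebra_simps)
    moreover have "x1 \<bullet> (h_slope_mat w2 *v x1) < 0"
      using h_slope_strict_antimono[of w w2 x1] h_slope_eq_form[of w2 x1] w2 w x1 by simp
    ultimately obtain r where "(r *\<^sub>R x1 + v) \<bullet> (h_slope_mat w2 *v (r *\<^sub>R x1 + v)) = 0"
      using sym_form_isotropic_combination_exists[OF h_slope_mat_sym] w w2 by force
    then have "h_slope w2 (r *\<^sub>R x1 + v) = 0" using h_slope_eq_form w w2 by simp
    then have "(r *\<^sub>R x1 + v) \<bullet> (D *v (r *\<^sub>R x1 + v)) \<le> h w2 (r *\<^sub>R x1 + v) - h w (r *\<^sub>R x1 + v)"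
      using bound w2 by simp
    also have "\<dots> \<le> (w2 - w) * h_slope w (r *\<^sub>R x1 + v)" using h_increment_le w w2 by simp
    also have "\<dots> = d * h_slope w v" unfolding w2_def slope_shift by simp
    finally show ?thesis unfolding D_shift .
  qed
  ultimately show ?thesis by (rule nonpos_if_le_small_multiples)
qed

lemma excess_nonpos_left:
  assumes w: "0 < w" "w \<le> 1" and slope_nsd: "\<And>x. h_slope w x \<le> 0"
    and x1: "x1 \<noteq> 0" "h_slope w x1 = 0" and D: "psd D"
    and bound: "\<And>w2 x. 0 < w2 \<Longrightarrow> w2 \<le> w \<Longrightarrow> h_slope w2 x = 0 \<Longrightarrow> x \<bullet> (D *v x) \<le> h w2 x - h w x"
  shows "v \<bullet> (D *v v) \<le> 0"
proof -
  interpret swap: sci PB PA QB QA using PA PB QA QB by unfold_locales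
  show ?thesis
  proof (rule swap.excess_nonpos_right[OF _ _ _ x1(1) _ D])
    fix w2 x
    assume "1 - w \<le> w2" "w2 < 1" "swap.h_slope w2 x = 0"
    then show "x \<bullet> (D *v x) \<le> swap.h w2 x - swap.h (1 - w) x"
      using bound[of "1 - w2" x] by (simp add: swap_H swap_h_slope)
  qed (use w slope_nsd x1(2) in \<open>auto simp: swap_h_slope\<close>)
qed

end

section \<open>Block matrices and the fused covariance\<close>

definition vec_inl :: "real^('n+'n) \<Rightarrow> real^'n" where
  "vec_inl z = (\<chi> i. z $ Inl i)"

definition vec_inr :: "real^('n+'n) \<Rightarrow> real^'n" where
  "vec_inr z = (\<chi> i. z $ Inr i)"

definition vec_join :: "real^'n \<Rightarrow> real^'n \<Rightarrow> real^('n+'n)" where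
  "vec_join u v = (\<chi> k. case k of Inl i \<Rightarrow> u $ i | Inr i \<Rightarrow> v $ i)"

lemma vec_inl_join [simp]: "vec_inl (vec_join u v) = u"
  and vec_inr_join [simp]: "vec_inr (vec_join u v) = v"
  by (simp_all add: vec_inl_def vec_inr_def vec_join_def vec_eq_iff)

lemma sum_UNIV_Plus:
  fixes g :: "'a::finite + 'b::finite \<Rightarrow> real"
  shows "sum g UNIV = sum (\<lambda>i. g (Inl i)) UNIV + sum (\<lambda>i. g (Inr i)) UNIV"
  using sum.Plus[of "UNIV :: 'a set" "UNIV :: 'b set" g] by (simp add: comp_def)

lemma inner_vec_Plus: "(z::real^('n::finite+'n)) \<bullet> y = vec_inl z \<bullet> vec_inl y + vec_inr z \<bullet> vec_inr y"
  by (simp add: inner_vec_def sum_UNIV_Plus vec_inl_def vec_inr_def)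

lemma block2_mult_vector:
  fixes A M B :: "real^'n^'n"
  shows "vec_inl (block2 A M B *v z) = A *v vec_inl z + M *v vec_inr z"
    and "vec_inr (block2 A M B *v z) = transpose M *v vec_inl z + B *v vec_inr z"
  by (simp_all add: vec_inl_def vec_inr_def vec_eq_iff matrix_vector_mult_def block2_def sum_UNIV_Plus)

definition block_form :: "real^'n^'n \<Rightarrow> real^'n^'n \<Rightarrow> real^'n^'n \<Rightarrow> real^'n \<Rightarrow> real^'n \<Rightarrow> real" where
  "block_form A M B u v = u \<bullet> (A *v u) + 2 * (u \<bullet> (M *v v)) + v \<bullet> (B *v v)"

lemma block2_form: "z \<bullet> (block2 A M B *v z) = block_form A M B (vec_inl z) (vec_inr z)"
  unfolding inner_vec_Plus[of z] block2_mult_vector block_form_def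
  by (simp add: inner_add_right inner_transpose_commute del: transpose_matrix_vector)

lemma block2_sym:
  fixes A M B :: "real^'n^'n"
  assumes "sym_mat A" and "sym_mat B"
  shows "sym_mat (block2 A M B)"
proof -
  have "A $ j $ i = A $ i $ j" "B $ j $ i = B $ i $ j" for i j
    using assms unfolding sym_mat_def transpose_def by (metis vec_lambda_beta)+
  then show ?thesis
    unfolding sym_mat_def transpose_def block2_def by (auto simp: vec_eq_iff split: sum.splits)
qed

lemma psd_block2_iff:
  fixes A M B :: "real^'n^'n"
  assumes "sym_mat A" and "sym_mat B"
  shows "psd (block2 A M B) \<longleftrightarrow> (\<forall>u v. 0 \<le> block_form A M B u v)"
  unfolding psd_def block2_form using block2_sym[OF assms] vec_inl_join vec_inr_join by metis

lemma block_form_add_diag: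
  "block_form (A + A') M (B + B') u v = block_form A M B u v + u \<bullet> (A' *v u) + v \<bullet> (B' *v v)"
  unfolding block_form_def by (simp add: matrix_vector_mult_add_rdistrib inner_add_right)

lemma block_form_diff:
  fixes A M B :: "real^'n^'n"
  assumes "sym_mat A" and "sym_mat B"
  shows "block_form A M B (u - s) (v - t)
           = block_form A M B u v - 2 * (u \<bullet> (A *v s + M *v t) + v \<bullet> (transpose M *v s + B *v t))
             + block_form A M B s t"
  using sym_mat_inner_commute[OF assms(1), of s u] sym_mat_inner_commute[OF assms(2), of t v]
    inner_transpose_commute[of v M s]
  unfolding block_form_def
  by (simp add: matrix_vector_mult_diff_distrib inner_diff_left inner_diff_right inner_add_right
      algebra_simps del: transpose_matrix_vector)

lemma C_F_form:
  fixes CA CB LA LB P :: "real^'n^'n"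
  shows "y \<bullet> (C_F CA CB LA LB P *v y) = block_form CA P CB (transpose LA *v y) (transpose LB *v y)"
proof -
  have prod: "y \<bullet> ((L ** M ** transpose N) *v y) = (transpose L *v y) \<bullet> (M *v (transpose N *v y))"
    for L M N :: "real^'n^'n"
    by (simp only: matrix_vector_mul_assoc[symmetric] dot_lmul_matrix[symmetric] transpose_matrix_vector
        vector_transpose_matrix)
  show ?thesis
    unfolding C_F_def block_form_def
    by (simp only: matrix_vector_mult_add_rdistrib inner_add_right prod inner_transpose_commute)
qed

lemma C_F_sym:
  assumes "sym_mat CA" and "sym_mat CB"
  shows "sym_mat (C_F CA CB LA LB P)"
  using assms unfolding sym_mat_def C_F_def
  by (simp add: transpose_add matrix_transpose_mul matrix_mul_assoc algebra_simps)

context sci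
begin

abbreviation CA :: "real^'n^'n" where "CA \<equiv> PA + QA"
abbreviation CB :: "real^'n^'n" where "CB \<equiv> PB + QB"
abbreviation Cf :: "real^'n^'n \<Rightarrow> real^'n^'n" where "Cf \<equiv> C_F_opt PA PB QA QB"

lemma CA_sym: "sym_mat CA" using PA QA by (simp add: sym_mat_add spd_sym)
lemma CB_sym: "sym_mat CB" using PB QB by (simp add: sym_mat_add spd_sym)

lemma A_Split_iff: "P \<in> A_Split PA PB \<longleftrightarrow> (\<forall>u v. 0 \<le> block_form PA P PB u v)"
  unfolding A_Split_def using psd_block2_iff[OF spd_sym[OF PA] spd_sym[OF PB]] by simp

lemma zero_in_A_Split: "0 \<in> A_Split PA PB"
  unfolding A_Split_iff block_form_def using spd_nonneg[OF PA] spd_nonneg[OF PB] by simp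

lemma block_form_nonneg:
  assumes "P \<in> A_Split PA PB"
  shows "0 \<le> block_form CA P CB u v"
  using assms spd_nonneg[OF QA, of u] spd_nonneg[OF QB, of v]
  unfolding block_form_add_diag A_Split_iff by (metis add_nonneg_nonneg)

definition R :: "real^'n^'n \<Rightarrow> real^'n^'n" where
  "R P = CA + CB - P - transpose P"

definition gain :: "real^'n^'n \<Rightarrow> real^'n^'n" where
  "gain P = (CB - transpose P) ** matrix_inv (R P)"

lemma Cf_eq: "Cf P = C_F CA CB (gain P) (mat 1 - gain P) P"
  unfolding C_F_opt_def Let_def gain_def R_def ..

lemma R_sym: "sym_mat (R P)"
  using spd_sym[OF PA] spd_sym[OF PB] spd_sym[OF QA] spd_sym[OF QB]
  unfolding R_def sym_mat_def by (simp add: transpose_add transpose_diff algebra_simps)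

lemma R_form: "y \<bullet> (R P *v y) = block_form CA P CB y (- y)"
  using inner_transpose_commute[of y P y]
  unfolding R_def block_form_def
  by (simp add: matrix_vector_mult_diff_rdistrib matrix_vector_mult_add_rdistrib inner_diff_right
      inner_add_right matrix_vector_mult_uminus_right del: transpose_matrix_vector)

lemma R_spd:
  assumes "P \<in> A_Split PA PB"
  shows "spd (R P)"
  unfolding spd_def
proof (intro conjI allI impI)
  show "sym_mat (R P)" by (rule R_sym)
  fix y :: "real^'n"
  assume "y \<noteq> 0"
  have "0 \<le> block_form PA P PB y (- y)" using assms A_Split_iff by blast
  moreover have "0 < y \<bullet> (QA *v y)" using spd_pos[OF QA \<open>y \<noteq> 0\<close>] .
  moreover have "0 \<le> (- y) \<bullet> (QB *v (- y))" using spd_nonneg[OF QB] .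
  ultimately show "0 < y \<bullet> (R P *v y)" unfolding R_form block_form_add_diag by linarith
qed

lemma R_transpose_gain:
  assumes "P \<in> A_Split PA PB"
  shows "R P *v (transpose (gain P) *v y) = (CB - P) *v y"
proof -
  have inv: "invertible (R P)" using spd_invertible[OF R_spd[OF assms]] .
  have "transpose (matrix_inv (R P)) = matrix_inv (R P)"
    using sym_mat_matrix_inv[OF R_sym inv] unfolding sym_mat_def .
  then have "transpose (gain P) = matrix_inv (R P) ** (CB - P)"
    using CB_sym unfolding gain_def matrix_transpose_mul transpose_diff sym_mat_def by simp
  then show ?thesis
    by (simp add: matrix_vector_mul_assoc[symmetric] matrix_inv_mult_vector(1)[OF inv]
        del: transpose_matrix_vector)
qed

lemma Cf_form: "y \<bullet> (Cf P *v y) = block_form CA P CB (transpose (gain P) *v y) (y - transpose (gain P) *v y)"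
proof -
  have "transpose (mat 1 - gain P) *v y = y - transpose (gain P) *v y"
    by (simp only: transpose_diff transpose_mat matrix_vector_mult_diff_rdistrib matrix_vector_mul_lid)
  then show ?thesis unfolding Cf_eq C_F_form by simp
qed

lemma block_form_complement:
  "block_form CA P CB u (y - u) = u \<bullet> (R P *v u) - 2 * (u \<bullet> ((CB - P) *v y)) + y \<bullet> (CB *v y)"
  using sym_mat_inner_commute[OF CB_sym, of y u] inner_transpose_commute[of u P u]
  unfolding block_form_def R_def
  by (simp add: matrix_vector_mult_diff_distrib matrix_vector_mult_diff_rdistrib
      matrix_vector_mult_add_rdistrib inner_diff_left inner_diff_right inner_add_right algebra_simps
      del: transpose_matrix_vector)

text \<open>The joint form at \<open>(u, y - u)\<close> is a quadratic in \<open>u\<close> with Hessian \<open>2 R\<close>, and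
  \<open>R_transpose_gain\<close> says that it is stationary at \<open>u = K\<^sub>A\<^sup>T y\<close>: the optimal gain minimises it.\<close>

lemma Cf_form_le:
  assumes "P \<in> A_Split PA PB"
  shows "y \<bullet> (Cf P *v y) \<le> block_form CA P CB u (y - u)"
proof -
  define a where "a = transpose (gain P) *v y"
  have Ra: "R P *v a = (CB - P) *v y" unfolding a_def by (rule R_transpose_gain[OF assms])
  have "block_form CA P CB u (y - u) - block_form CA P CB a (y - a) = (u - a) \<bullet> (R P *v (u - a))"
    unfolding block_form_complement Ra[symmetric] using sym_mat_inner_commute[OF R_sym[of P], of a u]
    by (simp add: matrix_vector_mult_diff_distrib inner_diff_left inner_diff_right algebra_simps)
  moreover have "0 \<le> (u - a) \<bullet> (R P *v (u - a))" using spd_nonneg[OF R_spd[OF assms]] .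
  ultimately show ?thesis unfolding Cf_form a_def by simp
qed

lemma Cf_spd:
  assumes "P \<in> A_Split PA PB"
  shows "spd (Cf P)"
  unfolding spd_def
proof (intro conjI allI impI)
  show "sym_mat (Cf P)" unfolding Cf_eq by (rule C_F_sym[OF CA_sym CB_sym])
  fix y :: "real^'n"
  assume y: "y \<noteq> 0"
  define a where "a = transpose (gain P) *v y"
  have "0 \<le> block_form PA P PB a (y - a)" using assms A_Split_iff by blast
  moreover have "0 < a \<bullet> (QA *v a) + (y - a) \<bullet> (QB *v (y - a))"
  proof (cases "a = 0")
    case True
    then show ?thesis using spd_pos[OF QB y] by simp
  next
    case False
    then show ?thesis using spd_pos[OF QA False] spd_nonneg[OF QB, of "y - a"] by linarith
  qed
  ultimately show "0 < y \<bullet> (Cf P *v y)"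
    unfolding Cf_form block_form_add_diag a_def[symmetric] by linarith
qed

end

section \<open>The SCI form as lower envelope of the fused information forms\<close>

definition outer_prod :: "real^'n \<Rightarrow> real^'n \<Rightarrow> real^'n^'n" where
  "outer_prod u v = (\<chi> i j. u $ i * v $ j)"

lemma outer_prod_mult_vector: "outer_prod u v *v y = (v \<bullet> y) *\<^sub>R u"
  by (simp add: outer_prod_def matrix_vector_mult_def inner_vec_def vec_eq_iff sum_distrib_left
      algebra_simps)

lemma transpose_outer_prod_mult_vector: "transpose (outer_prod u v) *v y = (u \<bullet> y) *\<^sub>R v"
  by (simp add: outer_prod_def transpose_def matrix_vector_mult_def inner_vec_def vec_eq_iff
      sum_distrib_left algebra_simps del: transpose_matrix_vector)

lemma add_cross_term_nonneg:
  fixes U V t :: real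
  assumes "0 \<le> U" and "0 \<le> V" and "t\<^sup>2 \<le> U * V"
  shows "0 \<le> U + 2 * t + V"
proof -
  have "(2 * t)\<^sup>2 \<le> (U + V)\<^sup>2"
    using assms(3) zero_le_power2[of "U - V"] by (simp add: power2_eq_square algebra_simps)
  then have "\<bar>2 * t\<bar> \<le> \<bar>U + V\<bar>" by (rule abs_le_square_iff[THEN iffD2])
  then show ?thesis using assms(1,2) by linarith
qed

context sci
begin

abbreviation g :: "real^'n \<Rightarrow> real" where
  "g \<equiv> g_fun PA PB QA QB"

text \<open>With \<open>u = w a\<close> and \<open>v = (1 - w) b\<close> the joint form at \<open>(u, v)\<close> falls short of \<open>h(w, x)\<close> by
  \<open>w (1 - w)\<close> times the form of the split matrix at \<open>(a, -b)\<close>.\<close>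

lemma h_le_fused_info:
  assumes P: "P \<in> A_Split PA PB" and w: "0 \<le> w" "w \<le> 1"
  shows "h w x \<le> x \<bullet> (matrix_inv (Cf P) *v x)"
proof -
  define a where "a = A.pinv w *v x"
  define b where "b = B.pinv (1 - w) *v x"
  define u where "u = w *\<^sub>R a"
  define v where "v = (1 - w) *\<^sub>R b"
  have ea: "PA *v a + w *\<^sub>R (QA *v a) = x" unfolding a_def using A.pinv_solves w by simp
  have eb: "PB *v b + (1 - w) *\<^sub>R (QB *v b) = x" unfolding b_def using B.pinv_solves w by simp
  have xa: "x \<bullet> a = a \<bullet> (PA *v a) + w * (a \<bullet> (QA *v a))"
    unfolding ea[symmetric] by (simp add: inner_add_left inner_add_right inner_commute)
  have xb: "x \<bullet> b = b \<bullet> (PB *v b) + (1 - w) * (b \<bullet> (QB *v b))"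
    unfolding eb[symmetric] by (simp add: inner_add_left inner_add_right inner_commute)
  have hw: "h w x = w * (x \<bullet> a) + (1 - w) * (x \<bullet> b)" unfolding h_eq a_def b_def ..
  have joint: "block_form CA P CB u v = w\<^sup>2 * (a \<bullet> (PA *v a) + a \<bullet> (QA *v a))
      + 2 * w * (1 - w) * (a \<bullet> (P *v b)) + (1 - w)\<^sup>2 * (b \<bullet> (PB *v b) + b \<bullet> (QB *v b))"
    unfolding block_form_def u_def v_def
    by (simp add: matrix_vector_mult_scaleR matrix_vector_mult_add_rdistrib inner_add_right
        power2_eq_square algebra_simps)
  have split: "block_form PA P PB a (- b) = a \<bullet> (PA *v a) - 2 * (a \<bullet> (P *v b)) + b \<bullet> (PB *v b)"
    unfolding block_form_def by (simp add: matrix_vector_mult_uminus_right)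
  have "h w x - block_form CA P CB u v = w * (1 - w) * block_form PA P PB a (- b)"
    unfolding hw xa xb joint split by algebra
  moreover have "0 \<le> w * (1 - w) * block_form PA P PB a (- b)"
    using P A_Split_iff w by (intro mult_nonneg_nonneg) auto
  moreover have "(u + v) \<bullet> (Cf P *v (u + v)) \<le> block_form CA P CB u v"
    using Cf_form_le[OF P, of "u + v" u] by simp
  moreover have "2 * (x \<bullet> (u + v)) - (u + v) \<bullet> (Cf P *v (u + v)) \<le> x \<bullet> (matrix_inv (Cf P) *v x)"
    by (rule inv_form_ge[OF Cf_spd[OF P]])
  moreover have "h w x = x \<bullet> (u + v)" unfolding hw u_def v_def by (simp add: inner_add_right)
  ultimately show ?thesis by linarith
qed

lemma fused_info_le_block_solution:
  assumes P: "P \<in> A_Split PA PB"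
    and e1: "CA *v uA + P *v uB = x" and e2: "transpose P *v uA + CB *v uB = x"
  shows "x \<bullet> (matrix_inv (Cf P) *v x) \<le> x \<bullet> (uA + uB)"
proof -
  define z where "z = matrix_inv (Cf P) *v x"
  define u where "u = transpose (gain P) *v z"
  define v where "v = z - u"
  have "block_form CA P CB uA uB = uA \<bullet> (CA *v uA + P *v uB) + uB \<bullet> (transpose P *v uA + CB *v uB)"
    unfolding block_form_def
    by (simp add: inner_add_right inner_transpose_commute del: transpose_matrix_vector)
  then have "block_form CA P CB uA uB = uA \<bullet> x + uB \<bullet> x" unfolding e1 e2 .
  then have "0 \<le> block_form CA P CB u v - 2 * (u \<bullet> x + v \<bullet> x) + (uA \<bullet> x + uB \<bullet> x)"
    using block_form_nonneg[OF P, of "u - uA" "v - uB"]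
    unfolding block_form_diff[OF CA_sym CB_sym] e1 e2 by simp
  moreover have "z \<bullet> (Cf P *v z) = block_form CA P CB u v"
    unfolding u_def v_def by (rule Cf_form)
  moreover have "x \<bullet> (matrix_inv (Cf P) *v x) = 2 * (x \<bullet> z) - z \<bullet> (Cf P *v z)"
    unfolding z_def by (rule inv_form_eq[OF Cf_spd[OF P]])
  moreover have "u \<bullet> x + v \<bullet> x = x \<bullet> z"
    unfolding v_def inner_diff_left by (simp add: inner_commute)
  ultimately show ?thesis by (simp add: inner_add_right inner_commute)
qed

lemma scaled_outer_prod_in_A_Split:
  assumes c: "0 \<le> c" and cab: "c\<^sup>2 * (a \<bullet> (PA *v a)) * (b \<bullet> (PB *v b)) \<le> 1"
  shows "c *\<^sub>R outer_prod (PA *v a) (PB *v b) \<in> A_Split PA PB"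
  unfolding A_Split_iff
proof (intro allI)
  fix u v :: "real^'n"
  define X where "X = u \<bullet> (PA *v a)"
  define Y where "Y = v \<bullet> (PB *v b)"
  have csA: "X\<^sup>2 \<le> (u \<bullet> (PA *v u)) * (a \<bullet> (PA *v a))"
    unfolding X_def by (rule psd_cauchy_schwarz[OF spd_imp_psd[OF PA]])
  have csB: "Y\<^sup>2 \<le> (v \<bullet> (PB *v v)) * (b \<bullet> (PB *v b))"
    unfolding Y_def by (rule psd_cauchy_schwarz[OF spd_imp_psd[OF PB]])
  have "(c * X * Y)\<^sup>2 = c\<^sup>2 * X\<^sup>2 * Y\<^sup>2" by (simp add: power_mult_distrib)
  also have "\<dots> \<le> c\<^sup>2 * ((u \<bullet> (PA *v u)) * (a \<bullet> (PA *v a))) * ((v \<bullet> (PB *v v)) * (b \<bullet> (PB *v b)))"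
    using csA csB spd_nonneg[OF PA, of u] spd_nonneg[OF PA, of a] by (intro mult_mono) auto
  also have "\<dots> = (c\<^sup>2 * (a \<bullet> (PA *v a)) * (b \<bullet> (PB *v b))) * ((u \<bullet> (PA *v u)) * (v \<bullet> (PB *v v)))"
    by simp
  also have "\<dots> \<le> 1 * ((u \<bullet> (PA *v u)) * (v \<bullet> (PB *v v)))"
    using cab spd_nonneg[OF PA, of u] spd_nonneg[OF PB, of v] by (intro mult_right_mono) auto
  finally have "0 \<le> u \<bullet> (PA *v u) + 2 * (c * X * Y) + v \<bullet> (PB *v v)"
    by (intro add_cross_term_nonneg spd_nonneg PA PB) simp
  moreover have "block_form PA (c *\<^sub>R outer_prod (PA *v a) (PB *v b)) PB u v
                   = u \<bullet> (PA *v u) + 2 * (c * X * Y) + v \<bullet> (PB *v v)"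
    unfolding block_form_def X_def Y_def
    by (simp add: scaleR_matrix_vector_assoc[symmetric] outer_prod_mult_vector inner_commute)
  ultimately show "0 \<le> block_form PA (c *\<^sub>R outer_prod (PA *v a) (PB *v b)) PB u v" by simp
qed

definition attained :: "real \<Rightarrow> real^'n \<Rightarrow> bool" where
  "attained w x \<longleftrightarrow> (\<exists>P\<in>A_Split PA PB. x \<bullet> (matrix_inv (Cf P) *v x) \<le> h w x)"

lemma h_le_g: "0 \<le> w \<Longrightarrow> w \<le> 1 \<Longrightarrow> h w x \<le> g x"
  unfolding g_fun_def M_F_opt_def using zero_in_A_Split h_le_fused_info by (intro cINF_greatest) auto

lemma g_le_h_if_attained: "attained w x \<Longrightarrow> g x \<le> h w x"
proof -
  assume "attained w x"
  then obtain P where P: "P \<in> A_Split PA PB" "x \<bullet> (matrix_inv (Cf P) *v x) \<le> h w x"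
    unfolding attained_def by blast
  have "bdd_below ((\<lambda>P. x \<bullet> (matrix_inv (Cf P) *v x)) ` A_Split PA PB)"
    using h_le_fused_info[of _ 0 x] by (intro bdd_belowI2[of _ "h 0 x"]) auto
  then show ?thesis unfolding g_fun_def M_F_opt_def using P by (intro cINF_lower2) auto
qed

text \<open>The rank-one cross-covariance \<open>c (P_A a) (P_B b)\<^sup>T\<close> makes \<open>(w a, (1 - w) b)\<close> solve the
  block system of the fusion, whence the fused information form is at most \<open>h(w, x)\<close>.\<close>

lemma attained_if_rank_one_witness:
  fixes x :: "real^'n"
  assumes w: "0 \<le> w" "w \<le> 1" and c: "0 \<le> c"
  defines "a \<equiv> A.pinv w *v x" and "b \<equiv> B.pinv (1 - w) *v x"
  assumes cab: "c\<^sup>2 * (a \<bullet> (PA *v a)) * (b \<bullet> (PB *v b)) \<le> 1"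
    and cb: "(1 - w) * (c * (b \<bullet> (PB *v b)) - 1) = 0"
    and ca: "w * (c * (a \<bullet> (PA *v a)) - 1) = 0"
  shows "attained w x"
proof -
  define P where "P = c *\<^sub>R outer_prod (PA *v a) (PB *v b)"
  have split: "P \<in> A_Split PA PB" unfolding P_def by (rule scaled_outer_prod_in_A_Split[OF c cab])
  have ea: "PA *v a + w *\<^sub>R (QA *v a) = x" unfolding a_def using A.pinv_solves w by simp
  have eb: "PB *v b + (1 - w) *\<^sub>R (QB *v b) = x" unfolding b_def using B.pinv_solves w by simp
  have "P *v ((1 - w) *\<^sub>R b) = ((1 - w) * (c * (b \<bullet> (PB *v b)))) *\<^sub>R (PA *v a)"
    unfolding P_def by (simp add: scaleR_matrix_vector_assoc[symmetric] outer_prod_mult_vector inner_commute)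
  also have "(1 - w) * (c * (b \<bullet> (PB *v b))) = 1 - w" using cb by (simp add: algebra_simps)
  finally have "CA *v (w *\<^sub>R a) + P *v ((1 - w) *\<^sub>R b) = PA *v a + w *\<^sub>R (QA *v a)"
    by (simp add: matrix_vector_mult_add_rdistrib matrix_vector_mult_scaleR algebra_simps)
  then have E1: "CA *v (w *\<^sub>R a) + P *v ((1 - w) *\<^sub>R b) = x" unfolding ea .
  have "transpose P *v (w *\<^sub>R a) = (w * (c * (a \<bullet> (PA *v a)))) *\<^sub>R (PB *v b)"
    unfolding P_def transpose_scalar
    by (simp add: scaleR_matrix_vector_assoc[symmetric] transpose_outer_prod_mult_vector inner_commute
        del: transpose_matrix_vector)
  also have "w * (c * (a \<bullet> (PA *v a))) = w" using ca by (simp add: algebra_simps)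
  finally have "transpose P *v (w *\<^sub>R a) + CB *v ((1 - w) *\<^sub>R b) = PB *v b + (1 - w) *\<^sub>R (QB *v b)"
    by (simp add: matrix_vector_mult_add_rdistrib matrix_vector_mult_scaleR algebra_simps
        del: transpose_matrix_vector)
  then have E2: "transpose P *v (w *\<^sub>R a) + CB *v ((1 - w) *\<^sub>R b) = x" unfolding eb .
  have "x \<bullet> (matrix_inv (Cf P) *v x) \<le> x \<bullet> (w *\<^sub>R a + (1 - w) *\<^sub>R b)"
    by (rule fused_info_le_block_solution[OF split E1 E2])
  also have "\<dots> = h w x" unfolding h_eq a_def b_def by (simp add: inner_add_right)
  finally show ?thesis unfolding attained_def using split by blast
qed

lemma attained_if_slope:
  assumes w: "0 \<le> w" "w \<le> 1"
    and slope: "h_slope w x = 0 \<or> (w = 1 \<and> 0 \<le> h_slope w x) \<or> (w = 0 \<and> h_slope w x \<le> 0)"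
  shows "attained w x"
proof (cases "x = 0")
  case True
  then show ?thesis unfolding attained_def using zero_in_A_Split by auto
next
  case False
  define \<alpha> where "\<alpha> = (A.pinv w *v x) \<bullet> (PA *v (A.pinv w *v x))"
  define \<beta> where "\<beta> = (B.pinv (1 - w) *v x) \<bullet> (PB *v (B.pinv (1 - w) *v x))"
  have \<alpha>: "0 < \<alpha>" unfolding \<alpha>_def using A.pinv_eq_0_imp w False by (intro spd_pos[OF PA]) auto
  have \<beta>: "0 < \<beta>" unfolding \<beta>_def using B.pinv_eq_0_imp[of "1 - w" x] w False by (intro spd_pos[OF PB]) auto
  have slope_eq: "h_slope w x = \<alpha> - \<beta>"
    unfolding h_slope_def A.slope_def B.slope_def \<alpha>_def \<beta>_def ..
  have witness: "attained w x"
    if "0 \<le> c" "c\<^sup>2 * \<alpha> * \<beta> \<le> 1" "(1 - w) * (c * \<beta> - 1) = 0" "w * (c * \<alpha> - 1) = 0" for c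
    using attained_if_rank_one_witness[OF w that(1)] that(2-4) unfolding \<alpha>_def \<beta>_def by blast
  consider "\<alpha> = \<beta>" | "w = 1" "\<beta> \<le> \<alpha>" | "w = 0" "\<alpha> \<le> \<beta>" using slope slope_eq by auto
  then show ?thesis
  proof cases
    case 1
    then show ?thesis using witness[of "1 / \<alpha>"] \<alpha> by (simp add: power2_eq_square)
  next
    case 2
    then show ?thesis using witness[of "1 / \<alpha>"] \<alpha> by (simp add: power2_eq_square field_simps)
  next
    case 3
    then show ?thesis using witness[of "1 / \<beta>"] \<beta> by (simp add: power2_eq_square field_simps)
  qed
qed

end

section \<open>Tight circumscription\<close>

context sci
begin

abbreviation Bsci :: "real \<Rightarrow> real^'n^'n" where
  "Bsci \<equiv> B_SCI PA PB QA QB"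

abbreviation Vstar :: "(real^'n) set" where
  "Vstar \<equiv> V_star PA PB QA QB"

lemma matrix_inv_Bsci: "0 \<le> w \<Longrightarrow> w \<le> 1 \<Longrightarrow> matrix_inv (Bsci w) = H w"
  unfolding B_SCI_def by (rule matrix_inv_matrix_inv[OF spd_invertible[OF H_spd]])

lemma Bsci_spd: "0 \<le> w \<Longrightarrow> w \<le> 1 \<Longrightarrow> spd (Bsci w)"
  unfolding B_SCI_def by (rule spd_matrix_inv[OF H_spd])

lemma ellipsoid_Bsci: "0 \<le> w \<Longrightarrow> w \<le> 1 \<Longrightarrow> ellipsoid (Bsci w) = {x. h w x \<le> 1}"
  unfolding ellipsoid_def by (simp add: matrix_inv_Bsci)

lemma Vstar_subset_ellipsoid_Bsci:
  assumes "0 \<le> w" and "w \<le> 1"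
  shows "Vstar \<subseteq> ellipsoid (Bsci w)"
proof
  fix x
  assume "x \<in> Vstar"
  then obtain P where "P \<in> A_Split PA PB" "x \<bullet> (matrix_inv (Cf P) *v x) \<le> 1"
    unfolding V_star_def ellipsoid_def by blast
  then have "h w x \<le> 1" using h_le_fused_info[OF _ assms, of P x] by linarith
  then show "x \<in> ellipsoid (Bsci w)" unfolding ellipsoid_Bsci[OF assms] by simp
qed

lemma dominated_imp_not_tight:
  assumes w: "0 \<le> w" "w \<le> 1" and "dominated w"
  shows "\<not> tightly_circumscribes (Bsci w) Vstar"
proof
  assume tight: "tightly_circumscribes (Bsci w) Vstar"
  obtain w2 where w2: "0 \<le> w2" "w2 \<le> 1" and lt: "\<And>x. x \<noteq> 0 \<Longrightarrow> h w x < h w2 x"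
    using assms(3) unfolding dominated_def by blast
  have "h w x \<le> h w2 x" for x using lt[of x] by (cases "x = 0") auto
  then have "ellipsoid (Bsci w2) \<subseteq> ellipsoid (Bsci w)"
    unfolding ellipsoid_Bsci[OF w] ellipsoid_Bsci[OF w2] by (auto intro: order_trans)
  then have "Bsci w2 = Bsci w"
    using tight Bsci_spd[OF w2] Vstar_subset_ellipsoid_Bsci[OF w2]
    unfolding tightly_circumscribes_def by blast
  then have "H w2 = H w" using matrix_inv_Bsci[OF w] matrix_inv_Bsci[OF w2] by metis
  moreover have "axis undefined (1::real) \<noteq> 0" by (simp add: axis_eq_0_iff)
  ultimately show False using lt by fastforce
qed

lemma dominated_imp_no_touching:
  assumes "dominated w"
  shows "\<not> (\<exists>x. x \<noteq> 0 \<and> g x = h w x)"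
  using assms h_le_g unfolding dominated_def by (metis not_le)

lemma no_touching_imp_dominated:
  assumes w: "0 \<le> w" "w \<le> 1" and no_touch: "\<not> (\<exists>x. x \<noteq> 0 \<and> g x = h w x)"
  shows "dominated w"
proof -
  have not_attained: "\<not> attained w x" if "x \<noteq> 0" for x
    using g_le_h_if_attained h_le_g[OF w, of x] no_touch that by force
  have e: "axis undefined (1::real) \<noteq> 0" by (simp add: axis_eq_0_iff)
  have "x \<bullet> (h_slope_mat w *v x) \<noteq> 0" if "x \<noteq> 0" for x
    using not_attained[OF that] attained_if_slope[OF w] h_slope_eq_form[OF w] by auto
  then consider "\<And>x. x \<noteq> 0 \<Longrightarrow> 0 < h_slope w x" | "\<And>x. x \<noteq> 0 \<Longrightarrow> h_slope w x < 0"
    using sym_form_anisotropic_imp_definite[OF h_slope_mat_sym[OF w]] h_slope_eq_form[OF w] by auto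
  then show ?thesis
  proof cases
    case 1
    have "w \<noteq> 1"
    proof
      assume "w = 1"
      then have "attained w (axis undefined 1)" using 1[OF e] by (intro attained_if_slope[OF w]) simp
      then show False using not_attained[OF e] by simp
    qed
    then show ?thesis using 1 w by (intro dominated_if_slope_pos_def) auto
  next
    case 2
    have "w \<noteq> 0"
    proof
      assume "w = 0"
      then have "attained w (axis undefined 1)" using 2[OF e] by (intro attained_if_slope[OF w]) simp
      then show False using not_attained[OF e] by simp
    qed
    then show ?thesis using 2 w by (intro dominated_if_slope_neg_def) auto
  qed
qed

text \<open>Any competitor \<open>\<E>(Q)\<close> gives the positive semidefinite excess \<open>D = Q\<inverse> - H(w)\<close>, which is
  bounded by \<open>h(w2, x) - h(w, x)\<close> wherever the envelope is attained at \<open>(w2, x)\<close>.\<close>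

lemma tight_if_excess_nonpos:
  assumes w: "0 \<le> w" "w \<le> 1"
    and excess: "\<And>D v. psd D \<Longrightarrow>
       (\<And>w2 x. 0 \<le> w2 \<Longrightarrow> w2 \<le> 1 \<Longrightarrow> attained w2 x \<Longrightarrow> x \<bullet> (D *v x) \<le> h w2 x - h w x) \<Longrightarrow>
       v \<bullet> (D *v v) \<le> 0"
  shows "tightly_circumscribes (Bsci w) Vstar"
  unfolding tightly_circumscribes_def
proof (intro conjI allI impI)
  show "Vstar \<subseteq> ellipsoid (Bsci w)" using Vstar_subset_ellipsoid_Bsci[OF w] .
  fix Q :: "real^'n^'n"
  assume Q: "spd Q" and VQ: "Vstar \<subseteq> ellipsoid Q" and QBsci: "ellipsoid Q \<subseteq> ellipsoid (Bsci w)"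
  define D where "D = matrix_inv Q - H w"
  have D_form: "x \<bullet> (D *v x) = x \<bullet> (matrix_inv Q *v x) - h w x" for x
    unfolding D_def by (simp add: matrix_vector_mult_diff_rdistrib inner_diff_right)
  have "psd D"
    unfolding psd_def D_form
    using sym_mat_diff[OF spd_sym[OF spd_matrix_inv[OF Q]] spd_sym[OF H_spd[OF w]]]
      ellipsoid_subset_imp_inv_form_le[OF Q QBsci] matrix_inv_Bsci[OF w]
    by (simp add: D_def)
  moreover have "x \<bullet> (D *v x) \<le> h w2 x - h w x" if att: "attained w2 x" for w2 x
  proof -
    obtain P where P: "P \<in> A_Split PA PB" "x \<bullet> (matrix_inv (Cf P) *v x) \<le> h w2 x"
      using att unfolding attained_def by blast
    have "ellipsoid (Cf P) \<subseteq> ellipsoid Q" using VQ P(1) unfolding V_star_def by blast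
    then have "x \<bullet> (matrix_inv Q *v x) \<le> x \<bullet> (matrix_inv (Cf P) *v x)"
      by (rule ellipsoid_subset_imp_inv_form_le[OF Cf_spd[OF P(1)]])
    then show ?thesis using P(2) unfolding D_form by simp
  qed
  ultimately have "D = 0" using excess by (intro psd_form_nonpos_imp_zero) blast+
  then have "matrix_inv Q = H w" unfolding D_def by simp
  then show "Q = Bsci w"
    unfolding B_SCI_def by (metis matrix_inv_matrix_inv[OF spd_invertible[OF Q]])
qed

lemma excess_nonpos_if_slope_psd:
  assumes w: "0 \<le> w" "w \<le> 1" and not_dom: "\<not> dominated w"
    and psd: "\<And>x. 0 \<le> h_slope w x" and D: "psd D"
    and bound: "\<And>w2 x. 0 \<le> w2 \<Longrightarrow> w2 \<le> 1 \<Longrightarrow> attained w2 x \<Longrightarrow> x \<bullet> (D *v x) \<le> h w2 x - h w x"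
  shows "v \<bullet> (D *v v) \<le> 0"
proof (cases "w = 1")
  case True
  then show ?thesis using bound[of w v] attained_if_slope[OF w] psd w by simp
next
  case False
  then obtain x1 where "x1 \<noteq> 0" "h_slope w x1 = 0"
    using not_dom dominated_if_slope_pos_def psd w by (metis order_le_less)
  moreover have "x \<bullet> (D *v x) \<le> h w2 x - h w x" if "w \<le> w2" "w2 < 1" "h_slope w2 x = 0" for w2 x
    using bound attained_if_slope that w by simp
  ultimately show ?thesis using excess_nonpos_right[OF _ _ psd _ _ D] False w by simp
qed

lemma excess_nonpos_if_slope_nsd:
  assumes w: "0 \<le> w" "w \<le> 1" and not_dom: "\<not> dominated w"
    and nsd: "\<And>x. h_slope w x \<le> 0" and D: "psd D"
    and bound: "\<And>w2 x. 0 \<le> w2 \<Longrightarrow> w2 \<le> 1 \<Longrightarrow> attained w2 x \<Longrightarrow> x \<bullet> (D *v x) \<le> h w2 x - h w x"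
  shows "v \<bullet> (D *v v) \<le> 0"
proof (cases "w = 0")
  case True
  then show ?thesis using bound[of w v] attained_if_slope[OF w] nsd w by simp
next
  case False
  then obtain x1 where "x1 \<noteq> 0" "h_slope w x1 = 0"
    using not_dom dominated_if_slope_neg_def nsd w by (metis order_le_less)
  moreover have "x \<bullet> (D *v x) \<le> h w2 x - h w x" if "0 < w2" "w2 \<le> w" "h_slope w2 x = 0" for w2 x
    using bound attained_if_slope that w by simp
  ultimately show ?thesis using excess_nonpos_left[OF _ _ nsd _ _ D] False w by simp
qed

lemma excess_nonpos_if_not_dominated:
  assumes w: "0 \<le> w" "w \<le> 1" and not_dom: "\<not> dominated w" and D: "psd D"
    and bound: "\<And>w2 x. 0 \<le> w2 \<Longrightarrow> w2 \<le> 1 \<Longrightarrow> attained w2 x \<Longrightarrow> x \<bullet> (D *v x) \<le> h w2 x - h w x"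
  shows "v \<bullet> (D *v v) \<le> 0"
proof -
  consider "\<exists>e. 0 < h_slope w e" "\<exists>f. h_slope w f < 0" | "\<And>x. 0 \<le> h_slope w x" | "\<And>x. h_slope w x \<le> 0"
    by (meson not_le)
  then show ?thesis
  proof cases
    case 1
    then obtain e f where "0 < h_slope w e" "h_slope w f < 0" by blast
    moreover have "x \<bullet> (D *v x) \<le> 0" if "x \<bullet> (h_slope_mat w *v x) = 0" for x
      using bound[of w x] attained_if_slope[OF w] w that h_slope_eq_form[OF w] by simp
    ultimately show ?thesis
      using psd_nonpos_if_nonpos_on_isotropic_cone[OF h_slope_mat_sym[OF w] D] h_slope_eq_form[OF w]
      by simp
  next
    case 2
    then show ?thesis by (rule excess_nonpos_if_slope_psd[OF w not_dom _ D bound])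
  next
    case 3
    then show ?thesis by (rule excess_nonpos_if_slope_nsd[OF w not_dom _ D bound])
  qed
qed

lemma tight_iff_not_dominated:
  assumes "0 \<le> w" and "w \<le> 1"
  shows "tightly_circumscribes (Bsci w) Vstar \<longleftrightarrow> \<not> dominated w"
  using dominated_imp_not_tight[OF assms] tight_if_excess_nonpos[OF assms]
    excess_nonpos_if_not_dominated[OF assms] by blast

lemma not_dominated_iff_touching:
  assumes "0 \<le> w" and "w \<le> 1"
  shows "\<not> dominated w \<longleftrightarrow> (\<exists>x. x \<noteq> 0 \<and> g x = h w x)"
  using dominated_imp_no_touching no_touching_imp_dominated[OF assms] by blast

end

theorem theorem4:
  fixes PA PB QA QB :: "real^'n^'n" and w1 :: real
  assumes "spd PA" and "spd PB" and "spd QA" and "spd QB"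
    and "0 \<le> w1" and "w1 \<le> 1"
  shows "tightly_circumscribes (B_SCI PA PB QA QB w1) (V_star PA PB QA QB) \<longleftrightarrow>
    (\<exists>x. x \<noteq> 0 \<and> g_fun PA PB QA QB x = x \<bullet> (H_SCI PA PB QA QB w1 *v x))"
proof -
  interpret sci PA PB QA QB using assms(1-4) by unfold_locales
  show ?thesis
    using tight_iff_not_dominated[OF assms(5,6)] not_dominated_iff_touching[OF assms(5,6)] by simp
qed

end
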